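(* Let $\widetilde M=(\mathbb{R}^2,dt^2+f(t)^2d\theta^2)$ be a non-compact model surface of revolution admitting a finite total curvature $c(\widetilde M)<2\pi$, and let $K(t):=-f''(t)/f(t)$. Then for every $\varepsilon>0$ there exists a non-compact model surface of revolution $\widetilde M_\varepsilon^+=(\mathbb{R}^2,dt^2+m_\varepsilon^+(t)^2d\theta^2)$, with radial curvature $G_\varepsilon^+(t):=-m_\varepsilon^{+\,\prime\prime}(t)/m_\varepsilon^+(t)$, admitting a finite total curvature, such that $G_\varepsilon^+\ge K$ on $[0,\infty)$, $\|G_\varepsilon^+-K\|_2:=\sqrt{\int_0^\infty|G_\varepsilon^+-K|^2dt}<\varepsilon$, $\limsup_{t\to\infty}G_\varepsilon^+(t)=+\infty$, and $|c(\widetilde M)-c(\widetilde M_\varepsilon^+)|<\varepsilon$.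
   Context: A non-compact model surface of revolution is $\mathbb{R}^2$ with the metric $dt^2+m(t)^2d\theta^2$, where $(t,\theta)$ are polar coordinates about the origin and $m:(0,\infty)\to(0,\infty)$ is smooth, extends to a smooth odd function around $0$, and satisfies $m'(0)=1$. Its Gauss (radial) curvature is $-m''(t)/m(t)$. The total curvature of such a surface with Gauss curvature $G$ is $c:=\int G_+\,dA+\int G_-\,dA$ with $G_+=\max\{G,0\}$, $G_-=\min\{G,0\}$ and $dA$ the area element; it is finite if both integrals are finite. *)

theory Defs
  imports "HOL-Analysis.Analysis"
begin

definition smooth_real :: "(real \<Rightarrow> real) \<Rightarrow> bool" where
  "smooth_real g \<longleftrightarrow> (\<forall>n::nat. \<forall>x::real. (deriv ^^ n) g differentiable (at x))"

text \<open>The function m on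
  (0,inf) is represented by its (unique) odd extension to the real line, which is smooth
  exactly when m is smooth on (0,inf) and extends to a smooth odd function around 0.\<close>
definition model_surface :: "(real \<Rightarrow> real) \<Rightarrow> bool" where
  "model_surface m \<longleftrightarrow> smooth_real m \<and> (\<forall>t. m (- t) = - m t) \<and> deriv m 0 = 1
     \<and> (\<forall>t>0. m t > 0)"

text \<open>Radial (Gauss) curvature -m''/m; at the origin it is the continuous extension,
  i.e. the limit of -m''(t)/m(t) as t tends to 0, which equals -m'''(0).\<close>
definition radial_curv :: "(real \<Rightarrow> real) \<Rightarrow> real \<Rightarrow> real" where
  "radial_curv m t = (if t = 0 then - (deriv ^^ 3) m 0
                      else - deriv (deriv m) t / m t)"

text \<open>Positive and negative parts of curvature integrated against the area element
  dA = m(t) dt d\<theta> over the plane (polar coordinates).\<close>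
definition finite_total_curvature :: "(real \<Rightarrow> real) \<Rightarrow> bool" where
  "finite_total_curvature m \<longleftrightarrow>
     set_integrable lborel {0<..} (\<lambda>t. max (radial_curv m t) 0 * m t) \<and>
     set_integrable lborel {0<..} (\<lambda>t. min (radial_curv m t) 0 * m t)"

definition total_curvature :: "(real \<Rightarrow> real) \<Rightarrow> real" where
  "total_curvature m =
     2 * pi * (LBINT t:{0<..}. max (radial_curv m t) 0 * m t)
   + 2 * pi * (LBINT t:{0<..}. min (radial_curv m t) 0 * m t)"

end

theory Submission
  imports Defs "HOL-Computational_Algebra.Polynomial"
begin

(* Let K = -f''/f.  Finite total curvature means K f is integrable on (0,inf) with integral
   c/(2 pi) < 1, so f' tends to 1 - c/(2 pi) > 0 and f grows at least linearly,
   f(s) >= beta (s - 1).  As K f is integrable and f >= beta far out, K > -1 at points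
   t_k -> inf, which we take at least 2 apart.  Put m = f g with g(t) = 1 - H(t) - H(-t),
   H' = h = u / f^2, where u (called ramps) is a sum of steep smooth steps of heights a_k
   centred at t_k.  Since (f^2 h)' = u', one finds m'' = f'' g - u'/f, i.e. for t > 0
       G_m = K + u' / (f^2 g),
   so G_m >= K, and the excess at t_k is at least k + 2.  Heights of size eta 2^-k make
   1 - g = O(eta) and the excess O(eta) in L^2 and in L^1(f dt); hence the total curvature
   changes by O(eta), and a small eta gives the theorem. *)

section \<open>Finite-order smoothness on open sets\<close>

lemma real_differentiable_iff_field:
  "(f::real\<Rightarrow>real) differentiable at x \<longleftrightarrow> f field_differentiable at x"
  by (simp add: field_differentiable_def real_differentiable_def)

text \<open>Smoothness on the line is this for all n on UNIV; working with finite orders and open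
  subsets lets us build smooth functions by induction on n and glue local descriptions.\<close>
definition smooth_upto :: "real set \<Rightarrow> nat \<Rightarrow> (real\<Rightarrow>real) \<Rightarrow> bool" where
  "smooth_upto S n f \<longleftrightarrow> (\<forall>k\<le>n. \<forall>x\<in>S. (deriv^^k) f differentiable (at x))"

lemma smooth_real_iff: "smooth_real f \<longleftrightarrow> (\<forall>n. smooth_upto UNIV n f)"
  unfolding smooth_real_def smooth_upto_def by blast

lemma smooth_upto_0: "smooth_upto S 0 f \<longleftrightarrow> (\<forall>x\<in>S. f differentiable at x)"
  by (simp add: smooth_upto_def)

lemma smooth_upto_Suc:
  "smooth_upto S (Suc n) f \<longleftrightarrow> (\<forall>x\<in>S. f differentiable at x) \<and> smooth_upto S n (deriv f)"
proof -
  have "(\<forall>k\<le>Suc n. P k) \<longleftrightarrow> P 0 \<and> (\<forall>k\<le>n. P (Suc k))" for P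
    by (metis Suc_le_mono not0_implies_Suc zero_le)
  then show ?thesis unfolding smooth_upto_def by (simp add: funpow_Suc_right del: funpow.simps)
qed

lemma smooth_upto_mono: "smooth_upto S n f \<Longrightarrow> k \<le> n \<Longrightarrow> smooth_upto S k f"
  by (simp add: smooth_upto_def)

lemma smooth_upto_subset: "smooth_upto S n f \<Longrightarrow> T \<subseteq> S \<Longrightarrow> smooth_upto T n f"
  unfolding smooth_upto_def by blast

lemma smooth_upto_differentiable:
  assumes "smooth_upto S n f" "x \<in> S" shows "f differentiable at x"
proof -
  have "(deriv^^0) f differentiable at x" using assms unfolding smooth_upto_def by blast
  thus ?thesis by simp
qed

lemma smooth_upto_local:
  assumes "\<And>x. x \<in> S \<Longrightarrow> \<exists>U. x \<in> U \<and> smooth_upto U n f"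
  shows "smooth_upto S n f"
  using assms unfolding smooth_upto_def by fast

lemma deriv_iter_cong_open:
  assumes "open S" "\<And>x. x \<in> S \<Longrightarrow> f x = g x" "x \<in> S"
  shows "(deriv^^k) f x = (deriv^^k) g x"
  using assms(3)
proof (induction k arbitrary: x)
  case 0 then show ?case using assms by simp
next
  case (Suc k)
  have "eventually (\<lambda>y. y \<in> S) (nhds x)" using assms(1) Suc.prems by (rule eventually_nhds_in_open)
  then have ev: "eventually (\<lambda>y. (deriv^^k) f y = (deriv^^k) g y) (nhds x)"
    by (rule eventually_mono) (rule Suc.IH)
  show ?case using deriv_cong_ev[OF ev refl] by simp
qed

lemma differentiable_cong_open:
  assumes "open S" "\<And>x. x \<in> S \<Longrightarrow> f x = g x" "x \<in> S" "f differentiable at x"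
  shows "(g::real\<Rightarrow>real) differentiable at x"
  using assms has_field_derivative_transform_within_open unfolding real_differentiable_def
  by (metis at_within_open)

lemma smooth_upto_cong:
  assumes "open S" "\<And>x. x \<in> S \<Longrightarrow> f x = g x"
  shows "smooth_upto S n f \<longleftrightarrow> smooth_upto S n g"
proof -
  have "(deriv^^k) f differentiable at x \<longleftrightarrow> (deriv^^k) g differentiable at x" if "x\<in>S" for k x
  proof -
    have "\<And>y. y\<in>S \<Longrightarrow> (deriv^^k) f y = (deriv^^k) g y" using deriv_iter_cong_open[OF assms] .
    then show ?thesis
      using differentiable_cong_open[OF assms(1), of "(deriv^^k) f" "(deriv^^k) g" x]
        differentiable_cong_open[OF assms(1), of "(deriv^^k) g" "(deriv^^k) f" x] that by metis
  qed
  then show ?thesis unfolding smooth_upto_def by blast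
qed

lemma smooth_upto_const: "smooth_upto S n (\<lambda>x. c)"
  by (induction n arbitrary: c) (simp_all add: smooth_upto_0 smooth_upto_Suc)

lemma smooth_upto_add:
  assumes "open S" "smooth_upto S n f" "smooth_upto S n g"
  shows "smooth_upto S n (\<lambda>x. f x + g x)"
  using assms(2,3)
proof (induction n arbitrary: f g)
  case 0 then show ?case by (auto simp: smooth_upto_0)
next
  case (Suc n)
  have d: "deriv (\<lambda>x. f x + g x) x = deriv f x + deriv g x" if "x\<in>S" for x
    using Suc.prems that by (simp add: smooth_upto_Suc real_differentiable_iff_field)
  have "smooth_upto S n (\<lambda>x. deriv f x + deriv g x)" using Suc by (simp add: smooth_upto_Suc)
  then have "smooth_upto S n (deriv (\<lambda>x. f x + g x))"
    using smooth_upto_cong[OF assms(1), of "deriv (\<lambda>x. f x + g x)" "\<lambda>x. deriv f x + deriv g x" n] d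
    by simp
  then show ?case using Suc.prems by (auto simp: smooth_upto_Suc)
qed

lemma smooth_upto_mult:
  assumes "open S" "smooth_upto S n f" "smooth_upto S n g"
  shows "smooth_upto S n (\<lambda>x. f x * g x)"
  using assms(2,3)
proof (induction n arbitrary: f g)
  case 0 then show ?case by (auto simp: smooth_upto_0)
next
  case (Suc n)
  have d: "deriv (\<lambda>x. f x * g x) x = f x * deriv g x + deriv f x * g x" if "x\<in>S" for x
    using Suc.prems that by (simp add: smooth_upto_Suc real_differentiable_iff_field)
  have "smooth_upto S n f" "smooth_upto S n g"
    using Suc.prems smooth_upto_mono[of S "Suc n"] by auto
  then have "smooth_upto S n (\<lambda>x. f x * deriv g x + deriv f x * g x)" using Suc
    by (intro smooth_upto_add assms Suc.IH) (auto simp: smooth_upto_Suc)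
  then have "smooth_upto S n (deriv (\<lambda>x. f x * g x))"
    using smooth_upto_cong[OF assms(1), of "deriv (\<lambda>x. f x * g x)"
        "\<lambda>x. f x * deriv g x + deriv f x * g x" n] d
    by simp
  then show ?case using Suc.prems by (auto simp: smooth_upto_Suc)
qed

lemma smooth_upto_cmult: "open S \<Longrightarrow> smooth_upto S n f \<Longrightarrow> smooth_upto S n (\<lambda>x. c * f x)"
  using smooth_upto_mult[OF _ smooth_upto_const] by blast

lemma smooth_upto_minus: "open S \<Longrightarrow> smooth_upto S n f \<Longrightarrow> smooth_upto S n (\<lambda>x. - f x)"
  using smooth_upto_cmult[of S n f "-1"] by simp

lemma smooth_upto_diff:
  "open S \<Longrightarrow> smooth_upto S n f \<Longrightarrow> smooth_upto S n g \<Longrightarrow> smooth_upto S n (\<lambda>x. f x - g x)"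
  using smooth_upto_add[OF _ _ smooth_upto_minus, of S n f g] by simp

lemma smooth_upto_sum:
  assumes "open S" "finite A" "\<And>k. k \<in> A \<Longrightarrow> smooth_upto S n (F k)"
  shows "smooth_upto S n (\<lambda>x. \<Sum>k\<in>A. F k x)"
  using assms(2,3)
  by (induction A rule: finite_induct) (simp_all add: smooth_upto_const smooth_upto_add assms(1))

lemma smooth_upto_compose:
  assumes "open S" "open T" "smooth_upto T n \<psi>" "smooth_upto S n p" "\<And>x. x \<in> S \<Longrightarrow> p x \<in> T"
  shows "smooth_upto S n (\<lambda>x. \<psi> (p x))"
  using assms(3,4)
proof (induction n arbitrary: \<psi>)
  case 0
  have "(\<lambda>x. \<psi> (p x)) differentiable at x" if "x \<in> S" for x
  proof -
    have "p differentiable at x" using 0 that by (simp add: smooth_upto_0)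
    moreover have "\<psi> differentiable at (p x)" using 0 that assms(5) by (simp add: smooth_upto_0)
    ultimately show ?thesis using differentiable_chain_at[of p x \<psi>] by (simp add: o_def)
  qed
  then show ?case by (simp add: smooth_upto_0)
next
  case (Suc n)
  have dp: "p differentiable at x" if "x \<in> S" for x
    using Suc.prems that by (simp add: smooth_upto_Suc)
  have dpsi: "\<psi> differentiable at (p x)" if "x \<in> S" for x
    using Suc.prems that assms(5) by (simp add: smooth_upto_Suc)
  have d: "deriv (\<lambda>x. \<psi> (p x)) x = deriv \<psi> (p x) * deriv p x" if "x\<in>S" for x
    using deriv_chain[of p x \<psi>] dp[OF that] dpsi[OF that]
    by (simp add: real_differentiable_iff_field o_def)
  have "smooth_upto S n (\<lambda>x. deriv \<psi> (p x))"
    using Suc smooth_upto_mono by (auto simp: smooth_upto_Suc)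
  then have "smooth_upto S n (\<lambda>x. deriv \<psi> (p x) * deriv p x)" using Suc.prems
    by (intro smooth_upto_mult assms) (auto simp: smooth_upto_Suc)
  then have "smooth_upto S n (deriv (\<lambda>x. \<psi> (p x)))"
    using smooth_upto_cong[OF assms(1), of "deriv (\<lambda>x. \<psi> (p x))"
        "\<lambda>x. deriv \<psi> (p x) * deriv p x" n] d
    by simp
  moreover have "(\<lambda>x. \<psi> (p x)) differentiable at x" if "x\<in>S" for x
    using differentiable_chain_at[OF dp[OF that] dpsi[OF that]] by (simp add: o_def)
  ultimately show ?case by (auto simp: smooth_upto_Suc)
qed

lemma deriv_affine: "deriv (\<lambda>x::real. a * x + b) = (\<lambda>x. a)"
  by (rule ext, rule DERIV_imp_deriv) (auto intro!: derivative_eq_intros)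

lemma smooth_upto_affine: "smooth_upto S n (\<lambda>x. a * x + b)"
  by (cases n)
     (auto simp: smooth_upto_0 smooth_upto_Suc deriv_affine smooth_upto_const
        intro!: derivative_intros)

lemma smooth_upto_inverse_id: "smooth_upto (-{0}) n (\<lambda>y::real. inverse y)"
proof (induction n)
  case 0 then show ?case
    by (auto simp: smooth_upto_0 real_differentiable_iff_field intro!: derivative_intros)
next
  case (Suc n)
  have d: "deriv (\<lambda>y. inverse y) x = - (inverse x * inverse x)" if "x \<in> -{0}" for x::real
    using that by (subst deriv_inverse) (auto simp: power2_eq_square field_simps)
  have "smooth_upto (-{0}) n (\<lambda>x. - (inverse x * inverse x))"
    using Suc by (intro smooth_upto_minus smooth_upto_mult) auto
  then have "smooth_upto (-{0}) n (deriv (\<lambda>y. inverse y))"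
    using smooth_upto_cong[of "-{0}" "deriv (\<lambda>y. inverse y)" "\<lambda>x. - (inverse x * inverse x)" n] d
    by auto
  then show ?case
    by (auto simp: smooth_upto_Suc real_differentiable_iff_field intro!: derivative_intros)
qed

lemma smooth_upto_inverse:
  assumes "open S" "smooth_upto S n f" "\<And>x. x \<in> S \<Longrightarrow> f x \<noteq> 0"
  shows "smooth_upto S n (\<lambda>x. inverse (f x))"
  using smooth_upto_compose[OF assms(1) _ smooth_upto_inverse_id assms(2)] assms(3) by auto

lemma deriv_reflect:
  fixes g :: "real \<Rightarrow> real"
  assumes "\<And>x. g (-x) = s * g x" "\<And>x. g differentiable at x"
  shows "deriv g (-x) = - s * deriv g x"
proof -
  have "((\<lambda>x. -x) has_real_derivative -1) (at x)" by (auto intro!: derivative_eq_intros)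
  moreover have "(g has_real_derivative deriv g (-x)) (at (-x))"
    using assms(2) by (simp add: DERIV_deriv_iff_real_differentiable)
  ultimately have "((\<lambda>x. g (-x)) has_real_derivative deriv g (-x) * (-1)) (at x)"
    using DERIV_chain2 by blast
  moreover have "((\<lambda>x. s * g x) has_real_derivative s * deriv g x) (at x)"
    using assms(2) by (auto intro!: derivative_eq_intros simp: DERIV_deriv_iff_real_differentiable)
  ultimately show ?thesis unfolding assms(1) using DERIV_unique by fastforce
qed

section \<open>A flat function and a smooth step\<close>

text \<open>The functions p(1/x) exp(-1/x) for x > 0, extended by 0: a class closed under
  differentiation, all of whose members are differentiable at 0.\<close>
definition flat_poly :: "real poly \<Rightarrow> real \<Rightarrow> real" where
  "flat_poly P x = (if x > 0 then poly P (1/x) * exp (-1/x) else 0)"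

text \<open>The polynomial describing the derivative: (flat_poly P)' = flat_poly (flat_deriv_poly P).\<close>
definition flat_deriv_poly :: "real poly \<Rightarrow> real poly" where
  "flat_deriv_poly P = [:0,0,1:] * (P - pderiv P)"

lemma poly_times_exp_neg_tendsto_0:
  fixes P :: "real poly" shows "((\<lambda>y. poly P y * exp (-y)) \<longlongrightarrow> 0) at_top"
proof -
  have "((\<lambda>y. \<Sum>i\<le>degree P. coeff P i * (y ^ i / exp y)) \<longlongrightarrow> 0) at_top"
    by (intro tendsto_null_sum tendsto_mult_right_zero tendsto_power_div_exp_0)
  moreover have "(\<Sum>i\<le>degree P. coeff P i * (y ^ i / exp y)) = poly P y * exp (-y)" for y
  proof -
    have "(\<Sum>i\<le>degree P. coeff P i * (y ^ i / exp y))
        = (\<Sum>i\<le>degree P. coeff P i * y^i) * inverse (exp y)"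
      by (simp add: sum_distrib_right divide_inverse mult.assoc)
    then show ?thesis by (simp add: poly_altdef exp_minus)
  qed
  ultimately show ?thesis by simp
qed

lemma flat_poly_quotient_tendsto_0: "((\<lambda>h. flat_poly P h / h) \<longlongrightarrow> 0) (at 0)"
  unfolding filterlim_at_split
proof
  show "((\<lambda>h. flat_poly P h / h) \<longlongrightarrow> 0) (at_left 0)"
  proof (rule Lim_transform_eventually)
    show "((\<lambda>h. 0::real) \<longlongrightarrow> 0) (at_left 0)" by simp
    show "\<forall>\<^sub>F x in at_left 0. 0 = flat_poly P x / x"
      unfolding eventually_at_filter by (rule always_eventually) (simp add: flat_poly_def)
  qed
  have "((\<lambda>h. poly ([:0,1:] * P) (inverse h) * exp (- inverse h)) \<longlongrightarrow> 0) (at_right 0)"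
    using filterlim_compose[OF poly_times_exp_neg_tendsto_0[of "[:0,1:] * P"]
        filterlim_inverse_at_top_right]
    by (simp add: mult.assoc)
  then show "((\<lambda>h. flat_poly P h / h) \<longlongrightarrow> 0) (at_right 0)"
  proof (rule Lim_transform_eventually)
    show "\<forall>\<^sub>F x in at_right 0.
        poly ([:0,1:] * P) (inverse x) * exp (- inverse x) = flat_poly P x / x"
      using eventually_at_right_less[of "0::real"]
      by eventually_elim (simp add: flat_poly_def field_simps)
  qed
qed

lemma flat_poly_has_derivative:
  "(flat_poly P has_real_derivative flat_poly (flat_deriv_poly P) x) (at x)"
proof (cases "x > 0")
  case True
  have d: "((\<lambda>y. poly P (1/y) * exp (-1/y)) has_real_derivative
      (poly (pderiv P) (1/x) * (- 1 / x^2)) * exp (-1/x) + poly P (1/x) * (exp (-1/x) * (1/x^2)))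
      (at x)"
    using True
    by (auto intro!: derivative_eq_intros DERIV_chain2[OF poly_DERIV] simp: power2_eq_square)
  have e: "(poly (pderiv P) (1/x) * (- 1 / x^2)) * exp (-1/x)
      + poly P (1/x) * (exp (-1/x) * (1/x^2))
      = flat_poly (flat_deriv_poly P) x"
    using True by (simp add: flat_poly_def flat_deriv_poly_def power2_eq_square field_simps)
  show ?thesis
    using True
    by (intro has_field_derivative_transform_within_open[OF d[unfolded e], of "{0<..}"])
       (auto simp: flat_poly_def)
next
  case False
  show ?thesis
  proof (cases "x < 0")
    case True
    have "((\<lambda>y. 0) has_real_derivative 0) (at x)" by simp
    then have "(flat_poly P has_real_derivative 0) (at x)"
      by (rule has_field_derivative_transform_within_open[of _ _ _ "{..<0}"])
         (use True in \<open>auto simp: flat_poly_def\<close>)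
    then show ?thesis using True by (simp add: flat_poly_def)
  next
    case False
    with \<open>\<not> x > 0\<close> have x: "x = 0" by simp
    have "((\<lambda>y. (flat_poly P y - flat_poly P 0) / (y - 0)) \<longlongrightarrow> 0) (at 0)"
      using flat_poly_quotient_tendsto_0 by (simp add: flat_poly_def)
    then show ?thesis unfolding x has_field_derivative_iff by (simp add: flat_poly_def)
  qed
qed

lemma deriv_flat_poly: "deriv (flat_poly P) = flat_poly (flat_deriv_poly P)"
  by (rule ext, rule DERIV_imp_deriv, rule flat_poly_has_derivative)

lemma smooth_upto_flat_poly: "smooth_upto S n (flat_poly P)"
proof -
  have iter: "(deriv^^k) (flat_poly P) = flat_poly ((flat_deriv_poly^^k) P)" for k
    by (induction k) (simp_all add: deriv_flat_poly)
  show ?thesis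
    unfolding smooth_upto_def iter using flat_poly_has_derivative real_differentiable_def by blast
qed

definition psi :: "real \<Rightarrow> real" where "psi = flat_poly 1"

lemma psi_eq: "psi x = (if x > 0 then exp (-1/x) else 0)"
  by (simp add: psi_def flat_poly_def)

lemma smooth_upto_psi: "smooth_upto S n psi" by (simp add: psi_def smooth_upto_flat_poly)

lemma psi_nonneg: "psi x \<ge> 0" by (simp add: psi_eq)
lemma psi_pos: "x > 0 \<Longrightarrow> psi x > 0" by (simp add: psi_eq)
lemma psi_zero: "x \<le> 0 \<Longrightarrow> psi x = 0" by (simp add: psi_eq)

lemma psi_has_derivative: "(psi has_real_derivative deriv psi x) (at x)"
  by (simp add: psi_def flat_poly_has_derivative deriv_flat_poly)

lemma deriv_psi_nonneg: "deriv psi x \<ge> 0"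
  by (simp add: psi_def deriv_flat_poly flat_poly_def flat_deriv_poly_def)

lemma deriv_psi_zero: "y \<le> 0 \<Longrightarrow> deriv psi y = 0"
  by (simp add: psi_def deriv_flat_poly flat_poly_def)

lemma psi_reflect_sum_pos: "psi (1+x) + psi (1-x) > 0"
  using psi_pos[of "1+x"] psi_pos[of "1-x"] psi_nonneg[of "1+x"] psi_nonneg[of "1-x"]
  by (cases "x > -1") auto

definition smooth_step :: "real \<Rightarrow> real" where
  "smooth_step x = psi (1+x) / (psi (1+x) + psi (1-x))"

definition smooth_step' :: "real \<Rightarrow> real" where
  "smooth_step' x = (deriv psi (1+x) * psi (1-x) + psi (1+x) * deriv psi (1-x))
                    / (psi (1+x) + psi (1-x))^2"

lemma smooth_upto_smooth_step: "smooth_upto UNIV n smooth_step"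
proof -
  have p1: "smooth_upto UNIV n (\<lambda>x. psi (1*x+1))"
    by (rule smooth_upto_compose[OF open_UNIV open_UNIV smooth_upto_psi smooth_upto_affine]) auto
  have p2: "smooth_upto UNIV n (\<lambda>x. psi ((-1)*x+1))"
    by (rule smooth_upto_compose[OF open_UNIV open_UNIV smooth_upto_psi smooth_upto_affine]) auto
  have "smooth_upto UNIV n (\<lambda>x. psi (1*x+1) * inverse (psi (1*x+1) + psi ((-1)*x+1)))"
  proof (intro smooth_upto_mult smooth_upto_inverse smooth_upto_add p1 p2 open_UNIV)
    fix x :: real
    show "psi (1*x+1) + psi ((-1)*x+1) \<noteq> 0"
      using psi_reflect_sum_pos[of x] by (simp add: add.commute)
  qed
  moreover have "(\<lambda>x. psi (1*x+1) * inverse (psi (1*x+1) + psi ((-1)*x+1))) = smooth_step"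
    by (rule ext) (simp add: smooth_step_def divide_inverse add.commute)
  ultimately show ?thesis by simp
qed

lemma smooth_step_low: "x \<le> -1 \<Longrightarrow> smooth_step x = 0"
  by (simp add: smooth_step_def psi_zero)
lemma smooth_step_high: "x \<ge> 1 \<Longrightarrow> smooth_step x = 1"
  using psi_reflect_sum_pos[of x] by (simp add: smooth_step_def psi_zero)
lemma smooth_step_nonneg: "smooth_step x \<ge> 0"
  using psi_reflect_sum_pos[of x] psi_nonneg by (simp add: smooth_step_def)
lemma smooth_step_le1: "smooth_step x \<le> 1"
  using psi_reflect_sum_pos[of x] psi_nonneg[of "1-x"] by (simp add: smooth_step_def)

lemma smooth_step_has_derivative: "(smooth_step has_real_derivative smooth_step' x) (at x)"
proof -
  have a: "((\<lambda>x. psi (1+x)) has_real_derivative deriv psi (1+x)) (at x)"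
  proof -
    have "((\<lambda>x. 1+x) has_real_derivative 1) (at x)" by (auto intro!: derivative_eq_intros)
    from DERIV_chain2[OF psi_has_derivative this] show ?thesis by simp
  qed
  have b: "((\<lambda>x. psi (1-x)) has_real_derivative - deriv psi (1-x)) (at x)"
  proof -
    have "((\<lambda>x. 1-x) has_real_derivative -1) (at x)" by (auto intro!: derivative_eq_intros)
    from DERIV_chain2[OF psi_has_derivative this] show ?thesis by simp
  qed
  have "(smooth_step has_real_derivative
     (deriv psi (1+x) * (psi (1+x) + psi (1-x)) - psi (1+x) * (deriv psi (1+x) + - deriv psi (1-x)))
       / ((psi (1+x) + psi (1-x)) * (psi (1+x) + psi (1-x)))) (at x)"
    unfolding smooth_step_def[abs_def]
    by (rule DERIV_divide[OF a DERIV_add[OF a b]]) (use psi_reflect_sum_pos[of x] in simp)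
  then show ?thesis by (simp add: smooth_step'_def power2_eq_square algebra_simps)
qed

lemma smooth_step'_nonneg: "smooth_step' x \<ge> 0"
  unfolding smooth_step'_def using deriv_psi_nonneg psi_nonneg
  by (intro divide_nonneg_nonneg add_nonneg_nonneg mult_nonneg_nonneg) auto

lemma smooth_step'_zero: "\<bar>x\<bar> \<ge> 1 \<Longrightarrow> smooth_step' x = 0"
  by (cases "x \<ge> 0") (auto simp: smooth_step'_def psi_zero deriv_psi_zero)

text \<open>By the mean value theorem the slope of the step reaches its average value 1/2;
  the spikes of curvature will be centred at such a point.\<close>
lemma smooth_step'_half: "\<exists>x0. \<bar>x0\<bar> < 1 \<and> smooth_step' x0 = 1/2"
proof -
  obtain z where "-1 < z" "z < 1" "smooth_step 1 - smooth_step (-1) = (1 - -1) * smooth_step' z"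
    using MVT2[of "-1" 1 smooth_step smooth_step'] smooth_step_has_derivative by auto
  then show ?thesis using smooth_step_high[of 1] smooth_step_low[of "-1"]
    by (intro exI[of _ z]) auto
qed

lemma smooth_step'_bounded: "\<exists>M>0. \<forall>x. smooth_step' x \<le> M"
proof -
  have "continuous_on {-1..1} smooth_step'"
  proof -
    have "deriv smooth_step = smooth_step'"
      by (rule ext, rule DERIV_imp_deriv, rule smooth_step_has_derivative)
    then have "smooth_step' differentiable at x" for x
      using smooth_upto_smooth_step[of "Suc 0"] unfolding smooth_upto_Suc smooth_upto_0 by auto
    then show ?thesis
      by (meson continuous_at_imp_continuous_on differentiable_imp_continuous_within)
  qed
  then obtain y where "y \<in> {-1..1}" "\<forall>x\<in>{-1..1}. smooth_step' x \<le> smooth_step' y"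
    using continuous_attains_sup[of "{-1..1::real}" smooth_step'] by auto
  then show ?thesis
    using smooth_step'_zero smooth_step'_nonneg
    by (intro exI[of _ "smooth_step' y + 1"]) (smt (verit, best) atLeastAtMost_iff)
qed

section \<open>Integration and measurability\<close>

lemma integral_le_sum_of_boxes:
  fixes F :: "real \<Rightarrow> real" and c l r :: "nat \<Rightarrow> real"
  assumes F_meas: "F \<in> borel_measurable borel"
    and F_nn: "\<And>t. 0 \<le> F t" and F_le: "\<And>t. F t \<le> (\<Sum>k. c k * indicator {l k..r k} t)"
    and c_nn: "\<And>k. 0 \<le> c k" and lr: "\<And>k. l k \<le> r k"
    and fin: "\<And>t. \<exists>N. \<forall>k\<ge>N. c k * indicator {l k..r k} t = 0"
    and summ: "summable (\<lambda>k. c k * (r k - l k))"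
  shows "integrable lborel F" "integral\<^sup>L lborel F \<le> (\<Sum>k. c k * (r k - l k))"
proof -
  define G where "G k t = c k * indicator {l k..r k} t" for k t
  have iG: "integrable lborel (G k)" for k
    unfolding G_def using lr[of k] by (intro integrable_mult_right integrable_real_indicator) auto
  have intG: "integral\<^sup>L lborel (G k) = c k * (r k - l k)" for k
    unfolding G_def using lr[of k] by (simp add: measure_def)
  have sG: "summable (\<lambda>k. norm (G k t))" for t
  proof -
    obtain N where N: "\<forall>k\<ge>N. G k t = 0" using fin[of t] unfolding G_def by blast
    show ?thesis by (rule summable_finite[of "{..<N}"]) (use N in auto)
  qed
  have nG: "(\<integral>x. norm (G k x) \<partial>lborel) = c k * (r k - l k)" for k
  proof -
    have "(\<lambda>x. norm (G k x)) = G k" using c_nn[of k] by (auto simp: G_def)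
    then show ?thesis using intG by simp
  qed
  have I: "integrable lborel (\<lambda>t. \<Sum>k. G k t)"
    by (rule integrable_suminf[OF iG]) (use sG summ nG in auto)
  have II: "(\<integral>t. (\<Sum>k. G k t) \<partial>lborel) = (\<Sum>k. c k * (r k - l k))"
    using integral_suminf[OF iG] sG summ nG intG by auto
  have le: "norm (F t) \<le> norm (\<Sum>k. G k t)" for t
  proof -
    have "0 \<le> (\<Sum>k. G k t)" using F_nn[of t] F_le[of t] unfolding G_def by linarith
    then show ?thesis using F_nn[of t] F_le[of t] unfolding G_def by simp
  qed
  show iF: "integrable lborel F"
    by (rule Bochner_Integration.integrable_bound[OF I]) (use F_meas le in auto)
  have "integral\<^sup>L lborel F \<le> (\<integral>t. (\<Sum>k. G k t) \<partial>lborel)"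
    by (rule integral_mono[OF iF I]) (use F_le in \<open>auto simp: G_def\<close>)
  then show "integral\<^sup>L lborel F \<le> (\<Sum>k. c k * (r k - l k))" using II by simp
qed

lemma differentiable_measurable:
  "(\<And>x. (q::real\<Rightarrow>real) differentiable at x) \<Longrightarrow> q \<in> borel_measurable borel"
  by (intro borel_measurable_continuous_onI)
     (meson continuous_at_imp_continuous_on differentiable_imp_continuous_within)

lemma radial_curv_measurable:
  assumes "\<And>x. m differentiable at x" "\<And>x. deriv (deriv m) differentiable at x"
  shows "radial_curv m \<in> borel_measurable borel"
proof -
  have [measurable]: "m \<in> borel_measurable borel" "deriv (deriv m) \<in> borel_measurable borel"
    using differentiable_measurable[OF assms(1)] differentiable_measurable[OF assms(2)] by auto
  have "(\<lambda>t. if t = 0 then - (deriv ^^ 3) m 0 else - deriv (deriv m) t / m t)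
      \<in> borel_measurable borel"
    by measurable
  then show ?thesis by (simp add: radial_curv_def[abs_def])
qed

lemma finite_total_curvature_by_density:
  assumes q: "set_integrable lborel {0<..} q"
    and eq: "\<And>t. t > 0 \<Longrightarrow> radial_curv m t * m t = q t"
    and [measurable]: "m \<in> borel_measurable borel" "radial_curv m \<in> borel_measurable borel"
  shows "finite_total_curvature m"
    and "total_curvature m = 2 * pi * (LBINT t:{0<..}. q t)"
proof -
  have part: "set_integrable lborel {0<..} (\<lambda>t. clip (radial_curv m t) * m t)"
    if [measurable]: "clip \<in> borel_measurable borel" and le: "\<And>x. \<bar>clip x\<bar> \<le> \<bar>x\<bar>"
    for clip :: "real \<Rightarrow> real"
  proof (rule set_integrable_bound[OF q])
    show "set_borel_measurable lborel {0<..} (\<lambda>t. clip (radial_curv m t) * m t)"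
      unfolding set_borel_measurable_def by measurable
    have "\<bar>clip (radial_curv m x)\<bar> * \<bar>m x\<bar> \<le> \<bar>q x\<bar>" if "x > 0" for x
      using mult_right_mono[OF le[of "radial_curv m x"], of "\<bar>m x\<bar>"] eq[OF that]
      by (simp add: abs_mult)
    then show "AE x in lborel. x \<in> {0<..} \<longrightarrow> norm (clip (radial_curv m x) * m x) \<le> norm (q x)"
      by (simp add: abs_mult)
  qed
  show fin: "finite_total_curvature m"
    unfolding finite_total_curvature_def
    using part[of "\<lambda>x. max x 0"] part[of "\<lambda>x. min x 0"] by auto
  have split: "max (radial_curv m t) 0 * m t + min (radial_curv m t) 0 * m t = q t" if "t > 0" for t
    using eq[OF that] by (cases "radial_curv m t \<ge> 0") (auto simp: max_def min_def algebra_simps)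
  have "total_curvature m = 2 * pi * (LBINT t:{0<..}.
          max (radial_curv m t) 0 * m t + min (radial_curv m t) 0 * m t)"
    using fin set_integral_add(2) unfolding total_curvature_def finite_total_curvature_def
    by (simp add: distrib_left)
  also have "\<dots> = 2 * pi * (LBINT t:{0<..}. q t)"
    using split by (intro arg_cong[where f = "\<lambda>x. 2 * pi * x"] set_lebesgue_integral_cong) auto
  finally show "total_curvature m = 2 * pi * (LBINT t:{0<..}. q t)" .
qed

section \<open>Consequences of finite total curvature below 2 pi\<close>

locale finite_curvature_model =
  fixes f :: "real \<Rightarrow> real"
  assumes model: "model_surface f" and finite_curv: "finite_total_curvature f"
    and curv_lt: "total_curvature f < 2 * pi"
begin

abbreviation "K \<equiv> radial_curv f"

lemma smooth_f: "smooth_upto UNIV n f"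
  using model unfolding model_surface_def smooth_real_iff by blast

lemma f_odd: "f (-t) = - f t" using model unfolding model_surface_def by blast
lemma f_pos: "t > 0 \<Longrightarrow> f t > 0" using model unfolding model_surface_def by blast
lemma f_0: "f 0 = 0" using f_odd[of 0] by simp
lemma f'_0: "deriv f 0 = 1" using model unfolding model_surface_def by blast

lemma f_differentiable: "f differentiable at x"
  using smooth_upto_differentiable[OF smooth_f[of 0]] by simp
lemma f'_differentiable: "deriv f differentiable at x"
  using smooth_f[of "Suc 0"] unfolding smooth_upto_Suc smooth_upto_0 by simp
lemma f''_differentiable: "deriv (deriv f) differentiable at x"
  using smooth_f[of "Suc (Suc 0)"] unfolding smooth_upto_Suc smooth_upto_0 by simp

lemma f''_0: "deriv (deriv f) 0 = 0"
proof -
  have "deriv f (-x) = deriv f x" for x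
    using deriv_reflect[of f "-1" x] f_odd f_differentiable by simp
  then have "deriv (deriv f) (-x) = - deriv (deriv f) x" for x
    using deriv_reflect[of "deriv f" 1 x] f'_differentiable by simp
  from this[of 0] show ?thesis by simp
qed

text \<open>The Jacobi equation f'' + K f = 0, including t = 0 where both sides vanish.\<close>
lemma Jacobi: "t \<ge> 0 \<Longrightarrow> K t * f t = - deriv (deriv f) t"
  using f_pos[of t] by (cases "t = 0") (auto simp: radial_curv_def f_0 f''_0)

lemma continuous_on_f: "continuous_on A f"
  using f_differentiable
  by (meson continuous_at_imp_continuous_on differentiable_imp_continuous_within)

lemma continuous_on_f'': "continuous_on A (deriv (deriv f))"
  using f''_differentiable
  by (meson continuous_at_imp_continuous_on differentiable_imp_continuous_within)

lemma K_measurable: "K \<in> borel_measurable borel"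
  by (rule radial_curv_measurable[OF f_differentiable f''_differentiable])

lemma f'_eq: "t \<ge> 0 \<Longrightarrow> deriv f t = 1 - integral {0..t} (\<lambda>s. K s * f s)"
proof -
  assume t: "t \<ge> 0"
  have "(deriv (deriv f) has_integral (deriv f t - deriv f 0)) {0..t}"
    using f'_differentiable
    by (intro fundamental_theorem_of_calculus[OF t])
       (auto simp: has_real_derivative_iff_has_vector_derivative[symmetric]
        DERIV_deriv_iff_real_differentiable intro: has_field_derivative_at_within)
  then have "((\<lambda>s. - (K s * f s)) has_integral (deriv f t - 1)) {0..t}"
    using Jacobi f'_0 by (auto intro: has_integral_eq)
  from has_integral_neg[OF this] show ?thesis by (simp add: integral_unique)
qed

lemma Kf_integrable: "set_integrable lborel {0<..} (\<lambda>t. K t * f t)"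
proof -
  have "set_integrable lborel {0<..} (\<lambda>t. max (K t) 0 * f t + min (K t) 0 * f t)"
    using finite_curv unfolding finite_total_curvature_def by (intro set_integral_add) auto
  moreover have "max (K t) 0 * f t + min (K t) 0 * f t = K t * f t" for t
    by (cases "K t \<ge> 0") (auto simp: max_def min_def algebra_simps)
  ultimately show ?thesis by simp
qed

lemma indicator_Kf: "indicator {0..} t * (K t * f t) = indicator {0<..} t * (K t * f t)"
  by (cases "t = 0") (auto simp: f_0 indicator_def)

definition curv_mass :: real where "curv_mass = (LBINT t:{0<..}. K t * f t)"

lemma total_curvature_f: "total_curvature f = 2 * pi * curv_mass"
proof -
  have i: "set_integrable lborel {0<..} (\<lambda>t. max (K t) 0 * f t)"
        "set_integrable lborel {0<..} (\<lambda>t. min (K t) 0 * f t)"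
    using finite_curv unfolding finite_total_curvature_def by auto
  have "max (K t) 0 * f t + min (K t) 0 * f t = K t * f t" for t
    by (cases "K t \<ge> 0") (auto simp: max_def min_def algebra_simps)
  then show ?thesis unfolding total_curvature_def curv_mass_def
    using set_integral_add(2)[OF i] by (simp add: algebra_simps)
qed

lemma curv_mass_lt_1: "curv_mass < 1" using curv_lt total_curvature_f by simp

lemma f'_tendsto: "(deriv f \<longlongrightarrow> 1 - curv_mass) at_top"
proof -
  have "set_integrable lborel {0..} (\<lambda>t. K t * f t)"
    using Kf_integrable unfolding set_integrable_def by (simp add: indicator_Kf)
  moreover have "curv_mass = (LBINT t:{0..}. K t * f t)"
    unfolding curv_mass_def set_lebesgue_integral_def by (simp add: indicator_Kf)
  ultimately have "((\<lambda>b. LBINT t:{0..b}. K t * f t) \<longlongrightarrow> curv_mass) at_top"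
    by (simp add: tendsto_set_lebesgue_integral_at_top)
  moreover have "(LBINT t:{0..b}. K t * f t) = integral {0..b} (\<lambda>t. K t * f t)" for b
  proof -
    have "continuous_on {0..b} (\<lambda>t. - deriv (deriv f) t)"
      by (intro continuous_intros continuous_on_f'')
    then have "set_integrable lborel {0..b} (\<lambda>t. - deriv (deriv f) t)"
      by (rule borel_integrable_atLeastAtMost')
    moreover have "(\<lambda>x. indicator {0..b} x *\<^sub>R - deriv (deriv f) x)
        = (\<lambda>x. indicator {0..b} x *\<^sub>R (K x * f x))"
      by (rule ext) (auto simp: Jacobi indicator_def)
    ultimately have "set_integrable lborel {0..b} (\<lambda>t. K t * f t)"
      unfolding set_integrable_def by metis
    then show ?thesis by (rule set_borel_integral_eq_integral)
  qed
  ultimately have "((\<lambda>b. 1 - integral {0..b} (\<lambda>t. K t * f t)) \<longlongrightarrow> 1 - curv_mass) at_top"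
    by (intro tendsto_intros) simp
  then show ?thesis
    by (rule Lim_transform_eventually)
       (auto simp: eventually_at_top_linorder f'_eq intro!: exI[of _ 0])
qed

definition abs_curv_mass :: real where "abs_curv_mass = (LBINT t:{0<..}. \<bar>K t * f t\<bar>)"

lemma abs_curv_mass_nonneg: "abs_curv_mass \<ge> 0"
  unfolding abs_curv_mass_def set_lebesgue_integral_def
  by (rule Bochner_Integration.integral_nonneg) (simp add: indicator_def)

text \<open>Since f' tends to a positive limit, f eventually grows at least linearly.\<close>
lemma f_eventually_linear: "\<exists>a>0. \<exists>T\<ge>2. \<forall>s\<ge>T. f s \<ge> a * (s - T)"
proof -
  define a where "a = (1 - curv_mass)/2"
  have a: "a > 0" using curv_mass_lt_1 a_def by simp
  have "eventually (\<lambda>s. deriv f s > a) at_top"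
    using order_tendstoD(1)[OF f'_tendsto, of a] curv_mass_lt_1 unfolding a_def by simp
  then obtain T0 where "\<forall>s\<ge>T0. deriv f s > a" by (auto simp: eventually_at_top_linorder)
  then obtain T where T: "T \<ge> 2" "\<And>s. s \<ge> T \<Longrightarrow> deriv f s \<ge> a"
    by (metis less_imp_le max.bounded_iff max.cobounded2)
  have "f s \<ge> a * (s - T)" if "s \<ge> T" for s
  proof (cases "s = T")
    case True then show ?thesis using f_pos[of T] T by simp
  next
    case False
    have Ts: "T < s" using that False by simp
    have "\<And>x. T \<le> x \<Longrightarrow> x \<le> s \<Longrightarrow> DERIV f x :> deriv f x"
      using f_differentiable by (simp add: DERIV_deriv_iff_real_differentiable)
    then obtain z where "T < z" "z < s" "f s - f T = (s - T) * deriv f z"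
      using MVT2[OF Ts] by blast
    moreover have "deriv f z \<ge> a" using T \<open>T < z\<close> by auto
    moreover have "f T > 0" using f_pos T by simp
    ultimately show ?thesis using \<open>s \<ge> T\<close>
      by (smt (verit, best) mult.commute mult_left_mono)
  qed
  then show ?thesis using a T by blast
qed

text \<open>Combining with the positive minimum of f on [2, T+1] gives a bound valid on [2, inf).\<close>
lemma f_linear_lower_bound: "\<exists>\<beta>>0. \<forall>s\<ge>2. f s \<ge> \<beta> * (s - 1)"
proof -
  obtain a T where a: "a > 0" and T: "T \<ge> 2" and grow: "\<And>s. s \<ge> T \<Longrightarrow> f s \<ge> a * (s - T)"
    using f_eventually_linear by blast
  obtain y where y: "y \<in> {2..T+1}" "\<And>s. s\<in>{2..T+1} \<Longrightarrow> f y \<le> f s"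
    using continuous_attains_inf[of "{2..T+1}" f] continuous_on_f T by auto
  define \<mu> where "\<mu> = f y"
  have mu: "\<mu> > 0" using y f_pos by (auto simp: \<mu>_def)
  define \<beta> where "\<beta> = min \<mu> a / T"
  have b: "\<beta> > 0" using mu a T by (simp add: \<beta>_def)
  have "f s \<ge> \<beta> * (s - 1)" if "s \<ge> 2" for s
  proof (cases "s \<le> T + 1")
    case True
    have "min \<mu> a / T \<le> \<mu> / T" using T by (simp add: divide_right_mono)
    then have "\<beta> * (s - 1) \<le> (\<mu> / T) * T"
      unfolding \<beta>_def by (rule mult_mono) (use True that T mu in auto)
    also have "\<dots> = \<mu>" using T by simp
    also have "\<dots> \<le> f s" using y True that by (simp add: \<mu>_def)
    finally show ?thesis .
  next
    case False
    have "min \<mu> a / T \<le> a / T" using T by (simp add: divide_right_mono)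
    then have "\<beta> * (s - 1) \<le> (a / T) * (s - 1)"
      unfolding \<beta>_def by (rule mult_right_mono) (use that in simp)
    also have "\<dots> \<le> a * (s - T)"
    proof -
      have "0 \<le> (T - 1) * (s - T - 1)" by (intro mult_nonneg_nonneg) (use False T in auto)
      then have "s - 1 \<le> T * (s - T)" by (simp add: algebra_simps)
      then have "(a / T) * (s - 1) \<le> (a / T) * (T * (s - T))"
        by (rule mult_left_mono) (use a T in simp)
      also have "\<dots> = a * (s - T)" using T by simp
      finally show ?thesis .
    qed
    also have "\<dots> \<le> f s" using grow False by simp
    finally show ?thesis .
  qed
  then show ?thesis using b by blast
qed

text \<open>If f grows linearly, K f integrable forces K > -1 at arbitrarily large t:
  otherwise |K f| \<ge> \<beta> on a half-line, which has infinite measure.\<close>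
lemma K_above_minus_1_unbounded:
  assumes "\<beta> > 0" "\<And>s. s \<ge> 2 \<Longrightarrow> f s \<ge> \<beta> * (s - 1)"
  shows "\<exists>t\<ge>R. K t > -1"
proof (rule ccontr)
  assume "\<not> ?thesis"
  then have Kle: "\<And>t. t \<ge> R \<Longrightarrow> K t \<le> -1" by force
  define R' where "R' = max R 2"
  have [measurable]: "K \<in> borel_measurable borel" "f \<in> borel_measurable borel"
    using K_measurable differentiable_measurable[OF f_differentiable] by auto
  have iA: "integrable lborel (\<lambda>t. indicator {0<..} t *\<^sub>R (K t * f t))"
    using Kf_integrable unfolding set_integrable_def .
  have "integrable lborel (\<lambda>t. \<beta> * indicator {R'..} t)"
  proof (rule Bochner_Integration.integrable_bound[OF iA])
    show "(\<lambda>t. \<beta> * indicator {R'..} t) \<in> borel_measurable lborel" by measurable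
    show "AE x in lborel. norm (\<beta> * indicator {R'..} x) \<le> norm (indicator {0<..} x *\<^sub>R (K x * f x))"
    proof (rule AE_I2)
      fix x show "norm (\<beta> * indicator {R'..} x) \<le> norm (indicator {0<..} x *\<^sub>R (K x * f x))"
      proof (cases "x \<ge> R'")
        case True
        have x2: "x \<ge> 2" "x \<ge> R" using True by (auto simp: R'_def)
        have b: "\<beta> \<le> f x"
        proof -
          have "\<beta> * 1 \<le> \<beta> * (x - 1)" using x2 assms(1) by (intro mult_left_mono) auto
          then show ?thesis using assms(2)[OF x2(1)] by simp
        qed
        have "1 * f x \<le> \<bar>K x\<bar> * f x" using Kle[OF x2(2)] b assms(1)
          by (intro mult_right_mono) auto
        then have "\<beta> \<le> \<bar>K x\<bar> * f x" using b by linarith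
        then show ?thesis using True x2 assms(1) b by (simp add: abs_mult indicator_def)
      qed (auto simp: indicator_def)
    qed
  qed
  then have "integrable lborel (indicator {R'..} :: real \<Rightarrow> real)"
    using assms(1) by simp
  then have fin: "emeasure lborel {R'..} < \<infinity>" by (simp add: integrable_indicator_iff)
  then obtain c where c: "emeasure lborel {R'..} = ennreal c" "c \<ge> 0"
    using less_top ennreal_cases by (metis infinity_ennreal_def)
  have "emeasure lborel {R'..R'+(c+1)} \<le> emeasure lborel {R'..}" by (rule emeasure_mono) auto
  then have "ennreal (c+1) \<le> ennreal c" using c by simp
  then show False using c by simp
qed

end

section \<open>The construction\<close>

locale spike_construction = finite_curvature_model +
  fixes \<beta> \<eta> M x0 :: real and centre :: "nat \<Rightarrow> real"
  assumes beta: "\<beta> > 0" and flow: "\<And>s. s \<ge> 2 \<Longrightarrow> f s \<ge> \<beta> * (s - 1)"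
    and eta: "0 < \<eta>" "\<eta> \<le> 1" "\<eta> \<le> \<beta>^2 / 4"
    and Mb: "M > 0" "\<And>x. smooth_step' x \<le> M"
    and x0: "\<bar>x0\<bar> < 1" "smooth_step' x0 = 1/2"
    and centre_0: "centre 0 \<ge> 3" and centre_Suc: "\<And>k. centre (Suc k) \<ge> centre k + 2"
    and centre_K: "\<And>k. K (centre k) > -1"
begin

lemma centre_ge: "centre k \<ge> 3 + 2 * real k"
  by (induction k) (use centre_0 centre_Suc in \<open>auto simp: algebra_simps\<close>, smt (verit) centre_Suc)

lemma centre_mono: "j < k \<Longrightarrow> centre k \<ge> centre j + 2"
proof (induction k)
  case 0 then show ?case by simp
next
  case (Suc k)
  then show ?case using centre_Suc[of k] by (cases "j = k") auto
qed

lemma centre_sep: "j \<noteq> k \<Longrightarrow> \<bar>centre j - centre k\<bar> \<ge> 2"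
  by (cases "j < k") (use centre_mono[of j k] centre_mono[of k j] in auto)

lemma f_ge_beta: assumes "s \<ge> 2" shows "f s \<ge> \<beta>"
proof -
  have "\<beta> * 1 \<le> \<beta> * (s - 1)" using assms beta by (intro mult_left_mono) auto
  then show ?thesis using flow[OF assms] by simp
qed

text \<open>The steepness makes the slope height k * steep k / 2 at the centre exceed (k+2) f(t_k)^2,
  while height^2 * steep still decays geometrically.\<close>
definition height :: "nat \<Rightarrow> real" where
  "height k = \<eta> / (2^k * ((real k + 2) * (f (centre k))^2 + 1))"
definition steep :: "nat \<Rightarrow> real" where
  "steep k = 2 * (real k + 2) * (f (centre k))^2 / height k + 4"

lemma height_denom_pos: "(real k + 2) * (f (centre k))^2 + 1 > 0" by (intro add_nonneg_pos) auto

lemma height_pos: "height k > 0"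
  using eta height_denom_pos[of k] unfolding height_def by (intro divide_pos_pos mult_pos_pos) auto

lemma height_le: "height k \<le> \<eta> / 2^k"
proof -
  have "1 \<le> (real k + 2) * (f (centre k))^2 + 1" by simp
  then have "2^k * 1 \<le> 2^k * ((real k + 2) * (f (centre k))^2 + 1)" by (intro mult_left_mono) auto
  moreover have "0 < 2^k * ((real k + 2) * (f (centre k))^2 + 1) * 2^k"
    using height_denom_pos[of k] by (intro mult_pos_pos) auto
  ultimately show ?thesis unfolding height_def using eta by (intro divide_left_mono) auto
qed

lemma height_times_weight: "height k * ((real k + 2) * (f (centre k))^2) \<le> \<eta> / 2^k"
proof -
  define q where "q = (real k + 2) * (f (centre k))^2"
  have q: "q \<ge> 0" by (simp add: q_def)
  have "height k * q = \<eta> / 2^k * (q / (q + 1))" by (simp add: height_def q_def)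
  also have "\<dots> \<le> \<eta> / 2^k * 1" using q eta by (intro mult_left_mono) auto
  finally show ?thesis by (simp add: q_def)
qed

lemma steep_ge: "steep k \<ge> 4"
  using height_pos[of k] by (simp add: steep_def)

lemma height_steep: "height k * steep k = 2 * (real k + 2) * (f (centre k))^2 + 4 * height k"
  using height_pos[of k] by (simp add: steep_def field_simps)

definition ramp :: "nat \<Rightarrow> real \<Rightarrow> real" where
  "ramp k t = height k * smooth_step (steep k * (t - centre k) + x0)"
definition ramp' :: "nat \<Rightarrow> real \<Rightarrow> real" where
  "ramp' k t = height k * steep k * smooth_step' (steep k * (t - centre k) + x0)"

lemma ramp_zero: assumes "t \<le> centre k - 1/2" shows "ramp k t = 0"
proof -
  have "steep k * (t - centre k) \<le> steep k * (-1/2)" using assms steep_ge[of k]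
    by (intro mult_left_mono) auto
  then have "steep k * (t - centre k) + x0 \<le> -1" using steep_ge[of k] x0 by linarith
  then show ?thesis by (simp add: ramp_def smooth_step_low)
qed

lemma ramp'_zero: assumes "\<bar>t - centre k\<bar> \<ge> 2 / steep k" shows "ramp' k t = 0"
proof -
  have s: "steep k > 0" using steep_ge[of k] by simp
  have "steep k * \<bar>t - centre k\<bar> \<ge> 2" using assms s by (simp add: field_simps)
  then have "\<bar>steep k * (t - centre k)\<bar> \<ge> 2" using s by (simp add: abs_mult)
  then have "\<bar>steep k * (t - centre k) + x0\<bar> \<ge> 1" using x0 by linarith
  then show ?thesis by (simp add: ramp'_def smooth_step'_zero)
qed

lemma ramp'_nonzero_near_centre: "ramp' k t \<noteq> 0 \<Longrightarrow> \<bar>t - centre k\<bar> < 2 / steep k"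
  using ramp'_zero by force

lemma box_radius_le: "2 / steep k \<le> 1/2"
  using steep_ge[of k] by (simp add: field_simps)

lemma ramp'_nonneg: "ramp' k t \<ge> 0"
  using height_pos[of k] steep_ge[of k] smooth_step'_nonneg by (simp add: ramp'_def)

lemma ramp'_le: "ramp' k t \<le> height k * steep k * M"
  using height_pos[of k] steep_ge[of k] Mb by (simp add: ramp'_def)

lemma ramp_nonneg: "ramp k t \<ge> 0"
  using height_pos[of k] smooth_step_nonneg by (simp add: ramp_def)

lemma ramp_le: "ramp k t \<le> height k"
  using height_pos[of k] smooth_step_le1 by (simp add: ramp_def mult_left_le)

lemma ramp_has_derivative: "(ramp k has_real_derivative ramp' k t) (at t)"
proof -
  have "((\<lambda>t. steep k * (t - centre k) + x0) has_real_derivative steep k) (at t)"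
    by (auto intro!: derivative_eq_intros)
  from DERIV_cmult[OF DERIV_chain2[OF smooth_step_has_derivative this], of "height k"]
  show ?thesis by (simp add: ramp_def[abs_def] ramp'_def mult_ac)
qed

lemma smooth_upto_ramp: "smooth_upto S n (ramp k)"
proof -
  define c where "c = x0 - steep k * centre k"
  have "smooth_upto UNIV n (\<lambda>t. smooth_step (steep k * t + c))"
    by (rule smooth_upto_compose[OF open_UNIV open_UNIV smooth_upto_smooth_step smooth_upto_affine])
       auto
  then have "smooth_upto UNIV n (\<lambda>t. height k * smooth_step (steep k * t + c))"
    by (rule smooth_upto_cmult[OF open_UNIV])
  moreover have "(\<lambda>t. height k * smooth_step (steep k * t + c)) = ramp k"
    by (rule ext) (simp add: ramp_def c_def algebra_simps)
  ultimately show ?thesis unfolding smooth_upto_def by simp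
qed

text \<open>Only the first ramp_count R ramps are nonzero on (-inf, R): sums are locally finite.\<close>
definition ramp_count :: "real \<Rightarrow> nat" where "ramp_count R = nat \<lceil>R\<rceil>"

lemma centre_beyond_count: assumes "k \<ge> ramp_count R" shows "centre k \<ge> R + 1/2"
proof -
  have "real k \<ge> R" using assms unfolding ramp_count_def by linarith
  then show ?thesis using centre_ge[of k] by linarith
qed

definition ramps :: "real \<Rightarrow> real" where "ramps t = (\<Sum>k. ramp k t)"
definition ramps' :: "real \<Rightarrow> real" where "ramps' t = (\<Sum>k. ramp' k t)"

lemma ramps_finite_sum: assumes "t < R" shows "ramps t = (\<Sum>k<ramp_count R. ramp k t)"
  unfolding ramps_def
proof (rule suminf_finite)
  fix k assume "k \<notin> {..<ramp_count R}"
  then have "centre k \<ge> R + 1/2" using centre_beyond_count by simp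
  then show "ramp k t = 0" using assms by (intro ramp_zero) linarith
qed simp

lemma ramps'_finite_sum: assumes "t < R" shows "ramps' t = (\<Sum>k<ramp_count R. ramp' k t)"
  unfolding ramps'_def
proof (rule suminf_finite)
  fix k assume "k \<notin> {..<ramp_count R}"
  then have "centre k \<ge> R + 1/2" using centre_beyond_count by simp
  then have "\<bar>t - centre k\<bar> \<ge> 2 / steep k" using box_radius_le[of k] assms by linarith
  then show "ramp' k t = 0" by (rule ramp'_zero)
qed simp

lemma ramps_has_derivative: "(ramps has_real_derivative ramps' t) (at t)"
proof -
  have "((\<lambda>x. \<Sum>k<ramp_count (t+1). ramp k x)
      has_real_derivative (\<Sum>k<ramp_count (t+1). ramp' k t)) (at t)"
    by (intro DERIV_sum ramp_has_derivative)
  then have "(ramps has_real_derivative (\<Sum>k<ramp_count (t+1). ramp' k t)) (at t)"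
    by (rule has_field_derivative_transform_within_open[of _ _ _ "{..<t+1}"])
       (auto simp: ramps_finite_sum)
  then show ?thesis using ramps'_finite_sum[of t "t+1"] by simp
qed

lemma deriv_ramps: "deriv ramps = ramps'"
  by (rule ext, rule DERIV_imp_deriv, rule ramps_has_derivative)

lemma smooth_upto_ramps: "smooth_upto UNIV n ramps"
proof (rule smooth_upto_local)
  fix x :: real assume "x \<in> UNIV"
  have "smooth_upto {..<x+1} n (\<lambda>t. \<Sum>k<ramp_count (x+1). ramp k t)"
    by (intro smooth_upto_sum smooth_upto_ramp) auto
  then have "smooth_upto {..<x+1} n ramps"
    using smooth_upto_cong[of "{..<x+1}" ramps "\<lambda>t. \<Sum>k<ramp_count (x+1). ramp k t" n]
    by (auto simp: ramps_finite_sum)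
  then show "\<exists>V. x \<in> V \<and> smooth_upto V n ramps" by (intro exI[of _ "{..<x+1}"]) auto
qed

lemma ramps_low: assumes "t \<le> 5/2" shows "ramps t = 0"
proof -
  have "ramp k t = 0" for k using centre_ge[of k] assms by (intro ramp_zero) auto
  then show ?thesis by (simp add: ramps_def)
qed

lemma ramps'_low: assumes "t \<le> 5/2" shows "ramps' t = 0"
proof -
  have "ramp' k t = 0" for k
    using centre_ge[of k] box_radius_le[of k] assms by (intro ramp'_zero) auto
  then show ?thesis by (simp add: ramps'_def)
qed

lemma summable_height: "summable height"
proof (rule summable_comparison_test[of _ "\<lambda>k. \<eta> * (1/2)^k"])
  show "\<exists>N. \<forall>n\<ge>N. norm (height n) \<le> \<eta> * (1/2)^n"
  proof (intro exI allI impI)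
    fix n :: nat
    have "norm (height n) = height n" using height_pos[of n] by simp
    also have "\<dots> \<le> \<eta> / 2^n" by (rule height_le)
    also have "\<dots> = \<eta> * (1/2)^n" by (simp add: power_one_over)
    finally show "norm (height n) \<le> \<eta> * (1/2)^n" .
  qed
  show "summable (\<lambda>k. \<eta> * (1/2::real)^k)" by (intro summable_mult summable_geometric) simp
qed

definition total_height :: real where "total_height = suminf height"

lemma total_height_le: "total_height \<le> 2 * \<eta>"
proof -
  have "total_height \<le> (\<Sum>k. \<eta> * (1/2)^k)"
    unfolding total_height_def
    by (intro suminf_le summable_height summable_mult summable_geometric)
       (use height_le in \<open>auto simp: power_one_over\<close>)
  also have "\<dots> = 2 * \<eta>" by (simp add: suminf_mult suminf_geometric)
  finally show ?thesis .
qed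

lemma ramps_nonneg: "ramps t \<ge> 0"
  using ramps_finite_sum[of t "t+1"] ramp_nonneg by (simp add: sum_nonneg)

lemma ramps_le: "ramps t \<le> total_height"
proof -
  have "ramps t \<le> (\<Sum>k<ramp_count (t+1). height k)" using ramps_finite_sum[of t "t+1"] ramp_le
    by (simp add: sum_mono)
  also have "\<dots> \<le> total_height" unfolding total_height_def
    by (rule sum_le_suminf[OF summable_height]) (use height_pos in \<open>auto intro: less_imp_le\<close>)
  finally show ?thesis .
qed

lemma total_height_nonneg: "total_height \<ge> 0"
  using ramps_le[of 0] ramps_nonneg[of 0] by simp

lemma ramps'_nonneg: "ramps' t \<ge> 0"
  using ramps'_finite_sum[of t "t+1"] ramp'_nonneg by (simp add: sum_nonneg)

lemma ramps'_ge: "ramps' t \<ge> ramp' k t"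
proof -
  define N where "N = max (ramp_count (t+1)) (Suc k)"
  have "ramps' t = (\<Sum>j<N. ramp' j t)"
    unfolding ramps'_def
  proof (rule suminf_finite)
    fix j assume "j \<notin> {..<N}"
    then have "centre j \<ge> t + 1 + 1/2" using centre_beyond_count[of "t+1" j] by (simp add: N_def)
    then show "ramp' j t = 0" using box_radius_le[of j] by (intro ramp'_zero) linarith
  qed simp
  also have "\<dots> \<ge> (\<Sum>j\<in>{k}. ramp' j t)"
    by (rule sum_mono2) (auto simp: N_def ramp'_nonneg)
  finally show ?thesis by simp
qed

text \<open>The supports of the ramp' are disjoint, so a nonzero value of ramps' comes from one ramp.\<close>
lemma ramps'_single_ramp: assumes "ramps' t \<noteq> 0"
  shows "\<exists>k. ramps' t = ramp' k t \<and> \<bar>t - centre k\<bar> < 2 / steep k"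
proof -
  have "\<exists>k. ramp' k t \<noteq> 0"
  proof (rule ccontr)
    assume "\<not> (\<exists>k. ramp' k t \<noteq> 0)"
    then have "ramps' t = 0" by (simp add: ramps'_def)
    then show False using assms by simp
  qed
  then obtain k where k: "ramp' k t \<noteq> 0" by blast
  have kk: "\<bar>t - centre k\<bar> < 2 / steep k" using ramp'_nonzero_near_centre[OF k] .
  have "ramp' j t = 0" if "j \<noteq> k" for j
  proof (rule ramp'_zero)
    have "\<bar>centre j - centre k\<bar> \<ge> 2" using centre_sep that by simp
    then show "\<bar>t - centre j\<bar> \<ge> 2 / steep j" using kk box_radius_le[of k] box_radius_le[of j]
      by linarith
  qed
  then have "ramps' t = (\<Sum>j\<in>{k}. ramp' j t)" unfolding ramps'_def by (intro suminf_finite) auto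
  then show ?thesis using kk by auto
qed

subsection \<open>The warping function m\<close>

text \<open>The perturbation: H' = h = u / f^2 with u = ramps, g = 1 - H(t) - H(-t), m = f g.
  Since f grows linearly, H is bounded by total_height / beta^2 \<le> 1/2.\<close>
definition h :: "real \<Rightarrow> real" where "h t = ramps t / (f t)^2"

lemma h_low: "t \<le> 5/2 \<Longrightarrow> h t = 0" by (simp add: h_def ramps_low)

lemma h_nonneg: "h t \<ge> 0" by (simp add: h_def ramps_nonneg)

lemma smooth_upto_h: "smooth_upto UNIV n h"
proof (rule smooth_upto_local)
  fix x :: real assume "x \<in> UNIV"
  show "\<exists>V. x \<in> V \<and> smooth_upto V n h"
  proof (cases "x < 5/2")
    case True
    have "smooth_upto {..<5/2} n h"
      using smooth_upto_cong[of "{..<5/2}" h "\<lambda>_. 0" n] smooth_upto_const h_low by auto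
    then show ?thesis using True by (intro exI[of _ "{..<5/2}"]) auto
  next
    case False
    have su: "smooth_upto {0<..} n ramps" by (rule smooth_upto_subset[OF smooth_upto_ramps]) auto
    have sf: "smooth_upto {0<..} n f" by (rule smooth_upto_subset[OF smooth_f]) auto
    have sff: "smooth_upto {0<..} n (\<lambda>t. f t * f t)" by (intro smooth_upto_mult sf) auto
    have nz: "\<And>x. x \<in> {0<..} \<Longrightarrow> f x * f x \<noteq> 0" using f_pos by fastforce
    have "smooth_upto {0<..} n (\<lambda>t. inverse (f t * f t))" using smooth_upto_inverse[OF _ sff nz]
      by auto
    then have "smooth_upto {0<..} n (\<lambda>t. ramps t * inverse (f t * f t))"
      by (intro smooth_upto_mult su) auto
    then have "smooth_upto {0<..} n h"
      using smooth_upto_cong[of "{0<..}" h "\<lambda>t. ramps t * inverse (f t * f t)" n]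
      by (auto simp: h_def power2_eq_square divide_inverse)
    then show ?thesis using False by (intro exI[of _ "{0<..}"]) auto
  qed
qed

lemma h_differentiable: "h differentiable at x"
  using smooth_upto_differentiable[OF smooth_upto_h[of 0]] by simp

lemma continuous_on_h: "continuous_on A h"
  using h_differentiable
  by (meson continuous_at_imp_continuous_on differentiable_imp_continuous_within)

definition h' :: "real \<Rightarrow> real" where
  "h' t = (ramps' t * (f t)^2 - ramps t * (2 * f t * deriv f t)) / ((f t)^2 * (f t)^2)"

lemma h_has_derivative: assumes "t > 0" shows "(h has_real_derivative h' t) (at t)"
proof -
  have df': "(f has_real_derivative deriv f t) (at t)"
    using f_differentiable by (simp add: DERIV_deriv_iff_real_differentiable)
  have "((\<lambda>x. (f x)^2) has_real_derivative 2 * f t * deriv f t) (at t)"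
    using DERIV_power[OF df', of 2] by (simp add: mult_ac)
  from DERIV_divide[OF ramps_has_derivative this] show ?thesis
    using f_pos[OF assms] unfolding h_def[abs_def] h'_def by simp
qed

lemma h_bound: assumes "t \<ge> 2" shows "h t \<le> total_height / \<beta>^2 * (1 / (t - 1)^2)"
proof -
  have "(\<beta> * (t - 1))^2 \<le> (f t)^2"
    using flow[OF assms] beta assms by (intro power_mono) auto
  moreover have "(\<beta> * (t - 1))^2 > 0" using beta assms by simp
  ultimately have "ramps t / (f t)^2 \<le> total_height / (\<beta> * (t - 1))^2"
    using ramps_le[of t] ramps_nonneg[of t] by (intro frac_le) auto
  then show ?thesis by (simp add: h_def power_mult_distrib)
qed

definition H :: "real \<Rightarrow> real" where "H t = integral {-1..t} h"

lemma H_low: assumes "t \<le> 5/2" shows "H t = 0"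
proof -
  have "integral {-1..t} h = integral {-1..t} (\<lambda>_. 0::real)"
    by (rule integral_cong) (use assms h_low in auto)
  then show ?thesis by (simp add: H_def)
qed

lemma H_has_derivative: "(H has_real_derivative h t) (at t)"
proof (cases "t < 5/2")
  case True
  have "((\<lambda>_. 0) has_real_derivative 0) (at t)" by simp
  then have "(H has_real_derivative 0) (at t)"
    by (rule has_field_derivative_transform_within_open[of _ _ _ "{..<5/2}"])
       (use True H_low in auto)
  then show ?thesis using h_low True by simp
next
  case False
  have "((\<lambda>x. integral {-1..x} h) has_real_derivative h t) (at t within {-1..t+1})"
    using False by (intro integral_has_real_derivative continuous_on_h) auto
  moreover have "at t within {-1..t+1} = at t"
    using False by (intro at_within_interior) auto
  ultimately show ?thesis by (simp add: H_def[abs_def])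
qed

lemma deriv_H: "deriv H = h"
  by (rule ext, rule DERIV_imp_deriv, rule H_has_derivative)

lemma smooth_upto_H: "smooth_upto UNIV n H"
proof (cases n)
  case 0 then show ?thesis using H_has_derivative
    by (auto simp: smooth_upto_0 real_differentiable_def)
next
  case (Suc k) then show ?thesis using H_has_derivative smooth_upto_h
    by (auto simp: smooth_upto_Suc deriv_H real_differentiable_def)
qed

lemma H_nonneg: "H t \<ge> 0"
  unfolding H_def
  by (rule integral_nonneg) (auto intro: integrable_continuous_interval continuous_on_h h_nonneg)

lemma inverse_square_integral: fixes t :: real assumes "t \<ge> 2"
  shows "((\<lambda>s. 1 / (s - 1)^2) has_integral (1 - 1/(t-1))) {2..t}"
proof -
  have "((\<lambda>s. 1 / (s - 1)^2) has_integral ((- 1/(t-1)) - (- 1/(2-1)))) {2..t}"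
  proof (rule fundamental_theorem_of_calculus[OF assms])
    fix x assume x: "x \<in> {2..t}"
    have "((\<lambda>s. - 1 / (s - 1)) has_real_derivative 1 / (x - 1)^2) (at x)"
      using x by (auto intro!: derivative_eq_intros simp: power2_eq_square field_simps)
    then show "((\<lambda>s. - 1 / (s - 1)) has_vector_derivative 1 / (x - 1)^2) (at x within {2..t})"
      by (simp add: has_real_derivative_iff_has_vector_derivative[symmetric]
          has_field_derivative_at_within)
  qed
  then show ?thesis by simp
qed

text \<open>H is bounded by integrating the bound on h over [2, inf).\<close>
lemma H_le: "H t \<le> total_height / \<beta>^2"
proof (cases "t \<le> 5/2")
  case True
  then show ?thesis using total_height_nonneg H_low beta by simp
next
  case False
  define c where "c = total_height / \<beta>^2"
  have I: "((\<lambda>s. c * (1 / (s - 1)^2)) has_integral (c * (1 - 1/(t-1)))) {2..t}"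
    using has_integral_mult_right[OF inverse_square_integral[of t], of c] False by simp
  have hi: "h integrable_on {-1..t}" by (intro integrable_continuous_interval continuous_on_h)
  have "integral {-1..2} h + integral {2..t} h = H t"
    unfolding H_def using Henstock_Kurzweil_Integration.integral_combine[of "-1" 2 t h] False hi
    by simp
  moreover have "integral {-1..2} h = 0" using H_low[of 2] by (simp add: H_def)
  moreover have "integral {2..t} h \<le> integral {2..t} (\<lambda>s. c * (1 / (s - 1)^2))"
  proof (rule integral_le)
    show "h integrable_on {2..t}" by (intro integrable_continuous_interval continuous_on_h)
    show "(\<lambda>s. c * (1 / (s - 1)^2)) integrable_on {2..t}"
      using I by (rule has_integral_integrable)
    show "\<And>x. x \<in> {2..t} \<Longrightarrow> h x \<le> c * (1 / (x - 1)^2)" using h_bound by (auto simp: c_def)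
  qed
  moreover have "integral {2..t} (\<lambda>s. c * (1 / (s - 1)^2)) = c * (1 - 1/(t-1))"
    using I by (rule integral_unique)
  moreover have "c * (1 - 1/(t-1)) \<le> c"
    using total_height_nonneg beta False by (intro mult_left_le) (auto simp: c_def)
  ultimately have "H t \<le> c" by linarith
  then show ?thesis by (simp add: c_def)
qed

lemma H_half: "H t \<le> 1/2"
proof -
  have "total_height / \<beta>^2 \<le> 2 * \<eta> / \<beta>^2" using total_height_le beta
    by (simp add: divide_right_mono)
  also have "\<dots> \<le> 1/2" using eta beta by (simp add: field_simps)
  finally have "total_height / \<beta>^2 \<le> 1/2" .
  then show ?thesis using H_le[of t] by linarith
qed

definition g :: "real \<Rightarrow> real" where "g t = 1 - H t - H (-t)"

lemma smooth_upto_g: "smooth_upto UNIV n g"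
proof -
  have "smooth_upto UNIV n (\<lambda>t. H ((-1) * t + 0))"
    by (rule smooth_upto_compose[OF open_UNIV open_UNIV smooth_upto_H smooth_upto_affine]) auto
  then have "smooth_upto UNIV n (\<lambda>t. 1 - H t - H ((-1) * t + 0))"
    by (intro smooth_upto_diff smooth_upto_const smooth_upto_H) auto
  then show ?thesis by (simp add: g_def[abs_def])
qed

lemma g_even: "g (-t) = g t" by (simp add: g_def)

lemma g_eq_one_minus_H: "t \<ge> 0 \<Longrightarrow> g t = 1 - H t" by (simp add: g_def H_low)

lemma g_one: "\<bar>t\<bar> \<le> 5/2 \<Longrightarrow> g t = 1" by (simp add: g_def H_low)

lemma g_le1: "g t \<le> 1"
  using H_nonneg[of t] H_nonneg[of "-t"] by (simp add: g_def)

lemma g_ge: "g t \<ge> 1/2"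
proof (cases "t \<ge> 0")
  case True then show ?thesis using g_eq_one_minus_H H_half[of t] by simp
next
  case False then show ?thesis using g_eq_one_minus_H[of "-t"] H_half[of "-t"] g_even[of t] by simp
qed

lemma g_has_derivative: assumes "t > 0" shows "(g has_real_derivative - h t) (at t)"
proof -
  have "((\<lambda>x. 1 - H x) has_real_derivative - h t) (at t)"
    using H_has_derivative[of t] by (auto intro!: derivative_eq_intros)
  then show ?thesis
    by (rule has_field_derivative_transform_within_open[of _ _ _ "{0<..}"])
       (use assms g_eq_one_minus_H in auto)
qed

definition m :: "real \<Rightarrow> real" where "m t = f t * g t"

lemma smooth_upto_m: "smooth_upto UNIV n m"
  unfolding m_def[abs_def] by (intro smooth_upto_mult smooth_f smooth_upto_g) auto

lemma m_odd: "m (-t) = - m t" by (simp add: m_def f_odd g_even)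

lemma m_eq_f: "\<bar>t\<bar> < 5/2 \<Longrightarrow> m t = f t" by (simp add: m_def g_one)

lemma m_pos: "t > 0 \<Longrightarrow> m t > 0"
  using f_pos[of t] g_ge[of t] by (simp add: m_def)

text \<open>m coincides with f near 0 and is a smooth odd product, positive on (0,inf).\<close>
lemma m_model_surface: "model_surface m"
proof -
  have "eventually (\<lambda>x. x \<in> {-2<..<2::real}) (nhds 0)"
    by (rule eventually_nhds_in_open) auto
  then have "eventually (\<lambda>x. m x = f x) (nhds 0)" by eventually_elim (auto simp: m_eq_f)
  then have "deriv m 0 = deriv f 0" by (rule deriv_cong_ev) simp
  then show ?thesis unfolding model_surface_def smooth_real_iff
    using smooth_upto_m m_odd m_pos f'_0 by auto
qed

lemma m'_eq: assumes "t > 0" shows "deriv m t = deriv f t * g t - f t * h t"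
proof -
  have d2: "(f has_real_derivative deriv f t) (at t)"
    using f_differentiable by (simp add: DERIV_deriv_iff_real_differentiable)
  have "(m has_real_derivative f t * (- h t) + deriv f t * g t) (at t)"
    unfolding m_def[abs_def] by (rule DERIV_mult'[OF d2 g_has_derivative[OF assms]])
  then show ?thesis by (simp add: DERIV_imp_deriv algebra_simps)
qed

text \<open>The key identity m'' = f'' g - u'/f: the terms f' h and f h' cancel against
  each other up to u'/f since (f^2 h)' = u'.\<close>
lemma m''_eq: assumes "t > 0" shows "deriv (deriv m) t = deriv (deriv f) t * g t - ramps' t / f t"
proof -
  have ev: "eventually (\<lambda>x. deriv m x = deriv f x * g x - f x * h x) (nhds t)"
  proof -
    have "eventually (\<lambda>x. x \<in> {0<..}) (nhds t)"
      by (rule eventually_nhds_in_open) (use assms in auto)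
    then show ?thesis by eventually_elim (simp add: m'_eq)
  qed
  have df': "(deriv f has_real_derivative deriv (deriv f) t) (at t)"
    using f'_differentiable by (simp add: DERIV_deriv_iff_real_differentiable)
  have d2: "(f has_real_derivative deriv f t) (at t)"
    using f_differentiable by (simp add: DERIV_deriv_iff_real_differentiable)
  have "((\<lambda>x. deriv f x * g x - f x * h x) has_real_derivative
        (deriv f t * (- h t) + deriv (deriv f) t * g t) - (f t * h' t + deriv f t * h t)) (at t)"
    by (rule DERIV_diff[OF DERIV_mult'[OF df' g_has_derivative[OF assms]]
          DERIV_mult'[OF d2 h_has_derivative[OF assms]]])
  then have "deriv (deriv m) t
      = (deriv f t * (- h t) + deriv (deriv f) t * g t) - (f t * h' t + deriv f t * h t)"
    using deriv_cong_ev[OF ev refl] by (simp add: DERIV_imp_deriv)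
  also have "\<dots> = deriv (deriv f) t * g t - ramps' t / f t"
    using f_pos[OF assms] by (simp add: h'_def h_def power2_eq_square field_simps)
  finally show ?thesis .
qed

definition excess :: "real \<Rightarrow> real" where "excess t = ramps' t / ((f t)^2 * g t)"

lemma curv_m_eq: assumes "t > 0" shows "radial_curv m t = K t + excess t"
proof -
  have f: "f t > 0" using f_pos[OF assms] .
  have gg: "g t > 0" using g_ge[of t] by simp
  show ?thesis using assms f gg
    by (simp add: radial_curv_def m''_eq m_def excess_def power2_eq_square field_simps)
qed

lemma curv_m_0: "radial_curv m 0 = K 0"
proof -
  have "(deriv^^3) m 0 = (deriv^^3) f 0"
    by (rule deriv_iter_cong_open[of "{-2<..<2}"]) (auto simp: m_eq_f)
  then show ?thesis by (simp add: radial_curv_def)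
qed

lemma excess_low: "t \<le> 5/2 \<Longrightarrow> excess t = 0" by (simp add: excess_def ramps'_low)

lemma curv_m_minus_K: "t \<ge> 0 \<Longrightarrow> radial_curv m t - K t = excess t"
  by (cases "t = 0") (auto simp: curv_m_eq curv_m_0 excess_low)

lemma excess_nonneg: "excess t \<ge> 0"
  using ramps'_nonneg[of t] g_ge[of t] by (simp add: excess_def)

lemma ramps'_differentiable: "ramps' differentiable at x"
  using smooth_upto_ramps[of "Suc 0"] unfolding smooth_upto_Suc smooth_upto_0 deriv_ramps by simp
lemma g_differentiable: "g differentiable at x"
  using smooth_upto_differentiable[OF smooth_upto_g[of 0]] by simp

lemma measurable_ingredients [measurable]:
  "ramps' \<in> borel_measurable borel" "f \<in> borel_measurable borel" "g \<in> borel_measurable borel"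
  "K \<in> borel_measurable borel"
  using differentiable_measurable[OF ramps'_differentiable] K_measurable
    differentiable_measurable[OF f_differentiable] differentiable_measurable[OF g_differentiable]
  by auto

lemma m_differentiable: "m differentiable at x"
  using smooth_upto_differentiable[OF smooth_upto_m[of 0]] by simp
lemma m''_differentiable: "deriv (deriv m) differentiable at x"
  using smooth_upto_m[of "Suc (Suc 0)"] unfolding smooth_upto_Suc smooth_upto_0 by simp

lemma measurable_m [measurable]:
  "m \<in> borel_measurable borel" "radial_curv m \<in> borel_measurable borel"
  using differentiable_measurable[OF m_differentiable]
    radial_curv_measurable[OF m_differentiable m''_differentiable]
  by auto

definition box_lo :: "nat \<Rightarrow> real" where "box_lo k = centre k - 2 / steep k"
definition box_hi :: "nat \<Rightarrow> real" where "box_hi k = centre k + 2 / steep k"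

lemma box_lo_le_hi: "box_lo k \<le> box_hi k" using steep_ge[of k] by (simp add: box_lo_def box_hi_def)
lemma box_width: "box_hi k - box_lo k = 4 / steep k" by (simp add: box_lo_def box_hi_def)

lemma boxes_locally_finite: fixes e :: "nat \<Rightarrow> real"
  shows "\<exists>N. \<forall>k\<ge>N. e k * indicator {box_lo k..box_hi k} t = 0"
proof (intro exI allI impI)
  fix k assume "k \<ge> ramp_count (t+1)"
  then have "centre k \<ge> t + 1 + 1/2" by (rule centre_beyond_count)
  then have "t < box_lo k" using box_radius_le[of k] by (simp add: box_lo_def)
  then show "e k * indicator {box_lo k..box_hi k} t = 0" by simp
qed

lemma boxes_summable: fixes e :: "nat \<Rightarrow> real"
  shows "summable (\<lambda>k. e k * indicator {box_lo k..box_hi k} t)"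
proof -
  obtain N where N: "\<forall>k\<ge>N. e k * indicator {box_lo k..box_hi k} t = 0" using boxes_locally_finite
    by blast
  show ?thesis by (rule summable_finite[of "{..<N}"]) (use N in auto)
qed

lemma box_le_sum:
  fixes e :: "nat \<Rightarrow> real"
  assumes "\<And>k. e k \<ge> 0" "t \<in> {box_lo k..box_hi k}"
  shows "e k \<le> (\<Sum>j. e j * indicator {box_lo j..box_hi j} t)"
proof -
  have "(\<Sum>j\<in>{k}. e j * indicator {box_lo j..box_hi j} t)
      \<le> (\<Sum>j. e j * indicator {box_lo j..box_hi j} t)"
    by (rule sum_le_suminf[OF boxes_summable]) (use assms in auto)
  moreover have "(\<Sum>j\<in>{k}. e j * indicator {box_lo j..box_hi j} t) = e k" using assms(2) by simp
  ultimately show ?thesis by simp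
qed

lemma boxes_sum_nonneg: fixes e :: "nat \<Rightarrow> real" assumes "\<And>k. e k \<ge> 0"
  shows "0 \<le> (\<Sum>j. e j * indicator {box_lo j..box_hi j} t)"
  by (rule suminf_nonneg[OF boxes_summable]) (use assms in auto)

lemma ramps'_nonzero_cases: assumes "ramps' t \<noteq> 0"
  obtains k where "ramps' t = ramp' k t" "t \<in> {box_lo k..box_hi k}" "t \<ge> 2"
proof -
  obtain k where k: "ramps' t = ramp' k t" "\<bar>t - centre k\<bar> < 2 / steep k"
    using ramps'_single_ramp[OF assms] by blast
  have "t \<ge> 2" using k(2) box_radius_le[of k] centre_ge[of k] by linarith
  moreover have "t \<in> {box_lo k..box_hi k}" using k(2) by (auto simp: box_lo_def box_hi_def)
  ultimately show ?thesis using k that by blast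
qed

text \<open>Box heights dominating excess^2 and ramps'/f; their areas are summable because
  height^2 * steep and height decay geometrically.\<close>
definition sq_box :: "nat \<Rightarrow> real" where "sq_box k = 4 * (height k * steep k * M)^2 / \<beta>^4"
definition abs_box :: "nat \<Rightarrow> real" where "abs_box k = height k * steep k * M / \<beta>"

lemma sq_box_nonneg: "sq_box k \<ge> 0" by (simp add: sq_box_def)
lemma abs_box_nonneg: "abs_box k \<ge> 0" using height_pos[of k] steep_ge[of k] Mb beta
  by (simp add: abs_box_def)

text \<open>Near t_k, f \<ge> beta and g \<ge> 1/2, which bounds the excess by its box height.\<close>
lemma excess_sq_le: "(excess t)^2 \<le> (\<Sum>k. sq_box k * indicator {box_lo k..box_hi k} t)"
proof (cases "ramps' t = 0")
  case True then show ?thesis using boxes_sum_nonneg[of sq_box] sq_box_nonneg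
    by (simp add: excess_def)
next
  case False
  then obtain k where k: "ramps' t = ramp' k t" "t \<in> {box_lo k..box_hi k}" "t \<ge> 2"
    by (rule ramps'_nonzero_cases)
  have fb: "f t \<ge> \<beta>" using f_ge_beta k(3) .
  have den: "\<beta>^2 / 2 \<le> (f t)^2 * g t"
  proof -
    have "\<beta>^2 \<le> (f t)^2" using fb beta by (intro power_mono) auto
    moreover have "(f t)^2 * (1/2) \<le> (f t)^2 * g t" by (rule mult_left_mono) (use g_ge in auto)
    ultimately show ?thesis by linarith
  qed
  have b2: "\<beta>^2 / 2 > 0" using beta by simp
  have pos: "(f t)^2 * g t > 0" using den b2 by linarith
  have p1: "excess t \<le> ramps' t / (\<beta>^2 / 2)"
    unfolding excess_def using den ramps'_nonneg[of t] pos b2 g_ge[of t]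
    by (intro divide_left_mono mult_pos_pos) auto
  have p2: "ramps' t \<le> height k * steep k * M" using k(1) ramp'_le by simp
  have "excess t \<le> 2 * (height k * steep k * M) / \<beta>^2"
    using p1 p2 beta by (simp add: field_simps)
  then have "(excess t)^2 \<le> (2 * (height k * steep k * M) / \<beta>^2)^2"
    using excess_nonneg[of t] by (intro power_mono) auto
  also have "\<dots> = sq_box k" by (simp add: sq_box_def power_divide power_mult_distrib)
  also have "\<dots> \<le> (\<Sum>k. sq_box k * indicator {box_lo k..box_hi k} t)"
    by (rule box_le_sum[OF sq_box_nonneg k(2)])
  finally show ?thesis .
qed

lemma ramps'_over_f_le: "ramps' t / f t \<le> (\<Sum>k. abs_box k * indicator {box_lo k..box_hi k} t)"
proof (cases "ramps' t = 0")
  case True then show ?thesis using boxes_sum_nonneg[of abs_box] abs_box_nonneg by simp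
next
  case False
  then obtain k where k: "ramps' t = ramp' k t" "t \<in> {box_lo k..box_hi k}" "t \<ge> 2"
    by (rule ramps'_nonzero_cases)
  have fb: "f t \<ge> \<beta>" using f_ge_beta k(3) .
  have "ramps' t / f t \<le> ramps' t / \<beta>" using fb beta ramps'_nonneg[of t]
    by (intro divide_left_mono) auto
  also have "\<dots> \<le> abs_box k" unfolding abs_box_def using k(1) ramp'_le[of k t] beta
    by (intro divide_right_mono) auto
  also have "\<dots> \<le> (\<Sum>k. abs_box k * indicator {box_lo k..box_hi k} t)"
    by (rule box_le_sum[OF abs_box_nonneg k(2)])
  finally show ?thesis .
qed

lemma ramps'_over_f_nonneg: "ramps' t / f t \<ge> 0"
proof (cases "t \<le> 5/2")
  case True then show ?thesis by (simp add: ramps'_low)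
next
  case False then show ?thesis using f_pos[of t] ramps'_nonneg[of t] by simp
qed

lemma height_sq_steep: "(height k)^2 * steep k \<le> 6 * \<eta> * (1/2)^k"
proof -
  have e: "\<eta> / 2^k \<le> 1" using eta by (simp add: field_simps) (smt (verit) one_le_power)
  have "(height k)^2 * steep k
      = 2 * (height k * ((real k + 2) * (f (centre k))^2)) + 4 * (height k)^2"
    using height_steep[of k] by (simp add: power2_eq_square algebra_simps)
  also have "\<dots> \<le> 2 * (\<eta> / 2^k) + 4 * (\<eta> / 2^k)^2"
    using height_times_weight[of k] height_le[of k] height_pos[of k]
    by (intro add_mono mult_left_mono power_mono) auto
  also have "(\<eta> / 2^k)^2 \<le> \<eta> / 2^k"
  proof -
    have "0 \<le> \<eta> / 2^k" using eta by simp
    then show ?thesis using mult_left_le[OF e, of "\<eta> / 2^k"] by (simp add: power2_eq_square)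
  qed
  then have "2 * (\<eta> / 2^k) + 4 * (\<eta> / 2^k)^2 \<le> 6 * (\<eta> / 2^k)" by simp
  also have "\<dots> = 6 * \<eta> * (1/2)^k" by (simp add: power_one_over)
  finally show ?thesis .
qed

lemma sq_box_term: "sq_box k * (box_hi k - box_lo k) \<le> 16 * M^2 / \<beta>^4 * (6 * \<eta> * (1/2)^k)"
proof -
  have "sq_box k * (box_hi k - box_lo k) = 16 * M^2 / \<beta>^4 * ((height k)^2 * steep k)"
    using steep_ge[of k] by (simp add: sq_box_def box_width power2_eq_square field_simps)
  also have "\<dots> \<le> 16 * M^2 / \<beta>^4 * (6 * \<eta> * (1/2)^k)"
    using height_sq_steep[of k] beta by (intro mult_left_mono) auto
  finally show ?thesis .
qed

lemma sq_box_summable: "summable (\<lambda>k. sq_box k * (box_hi k - box_lo k))"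
proof (rule summable_comparison_test[of _ "\<lambda>k. 16 * M^2 / \<beta>^4 * (6 * \<eta> * (1/2)^k)"])
  show "\<exists>N. \<forall>n\<ge>N. norm (sq_box n * (box_hi n - box_lo n)) \<le> 16 * M^2 / \<beta>^4 * (6 * \<eta> * (1/2)^n)"
    using sq_box_term sq_box_nonneg box_lo_le_hi by (intro exI[of _ 0]) (auto simp: abs_of_nonneg)
  show "summable (\<lambda>k. 16 * M^2 / \<beta>^4 * (6 * \<eta> * (1/2::real)^k))"
    by (intro summable_mult summable_geometric) simp
qed

lemma sq_box_sum: "(\<Sum>k. sq_box k * (box_hi k - box_lo k)) \<le> 192 * M^2 * \<eta> / \<beta>^4"
proof -
  have "(\<Sum>k. sq_box k * (box_hi k - box_lo k)) \<le> (\<Sum>k. 16 * M^2 / \<beta>^4 * (6 * \<eta> * (1/2::real)^k))"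
    by (intro suminf_le sq_box_summable sq_box_term summable_mult summable_geometric) simp
  also have "\<dots> = (96 * M^2 * \<eta> / \<beta>^4) * (\<Sum>k. (1/2::real)^k)"
    by (subst suminf_mult[symmetric]) (auto intro: summable_geometric simp: algebra_simps)
  also have "\<dots> = 192 * M^2 * \<eta> / \<beta>^4" using suminf_geometric[of "1/2::real"] by simp
  finally show ?thesis .
qed

lemma abs_box_term: "abs_box k * (box_hi k - box_lo k) = 4 * M / \<beta> * height k"
  using steep_ge[of k] by (simp add: abs_box_def box_width field_simps)

lemma abs_box_summable: "summable (\<lambda>k. abs_box k * (box_hi k - box_lo k))"
  unfolding abs_box_term by (intro summable_mult summable_height)

lemma abs_box_sum: "(\<Sum>k. abs_box k * (box_hi k - box_lo k)) \<le> 8 * M * \<eta> / \<beta>"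
proof -
  have "(\<Sum>k. abs_box k * (box_hi k - box_lo k)) = 4 * M / \<beta> * total_height"
    unfolding abs_box_term total_height_def by (intro suminf_mult summable_height)
  also have "\<dots> \<le> 4 * M / \<beta> * (2 * \<eta>)" using total_height_le Mb beta by (intro mult_left_mono) auto
  finally show ?thesis by simp
qed

lemma excess_measurable[measurable]: "excess \<in> borel_measurable borel"
  unfolding excess_def[abs_def] by measurable

lemma excess_sq_integrable: "integrable lborel (\<lambda>t. (excess t)^2)"
  and excess_sq_integral: "integral\<^sup>L lborel (\<lambda>t. (excess t)^2) \<le> 192 * M^2 * \<eta> / \<beta>^4"
proof -
  note I = integral_le_sum_of_boxes[of "\<lambda>t. (excess t)^2" sq_box box_lo box_hi,
      OF _ _ excess_sq_le sq_box_nonneg box_lo_le_hi boxes_locally_finite sq_box_summable]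
  show "integrable lborel (\<lambda>t. (excess t)^2)" by (rule I(1)) auto
  show "integral\<^sup>L lborel (\<lambda>t. (excess t)^2) \<le> 192 * M^2 * \<eta> / \<beta>^4"
  proof -
    have "(\<lambda>t. (excess t)^2) \<in> borel_measurable borel" by measurable
    then have "integral\<^sup>L lborel (\<lambda>t. (excess t)^2) \<le> (\<Sum>k. sq_box k * (box_hi k - box_lo k))"
      using I(2) by simp
    then show ?thesis using sq_box_sum by linarith
  qed
qed

lemma ramps'_over_f_integrable: "integrable lborel (\<lambda>t. ramps' t / f t)"
  and ramps'_over_f_integral: "integral\<^sup>L lborel (\<lambda>t. ramps' t / f t) \<le> 8 * M * \<eta> / \<beta>"
proof -
  have [measurable]: "(\<lambda>t. ramps' t / f t) \<in> borel_measurable borel" by measurable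
  note I = integral_le_sum_of_boxes[of "\<lambda>t. ramps' t / f t" abs_box box_lo box_hi,
      OF _ ramps'_over_f_nonneg ramps'_over_f_le abs_box_nonneg box_lo_le_hi boxes_locally_finite
      abs_box_summable]
  show "integrable lborel (\<lambda>t. ramps' t / f t)" by (rule I(1)) auto
  show "integral\<^sup>L lborel (\<lambda>t. ramps' t / f t) \<le> 8 * M * \<eta> / \<beta>"
    using I(2) abs_box_sum by fastforce
qed

lemma excess_neg: "t < 0 \<Longrightarrow> excess t = 0" by (simp add: excess_low)

lemma L2_eq: "(\<lambda>t. indicator {0..} t *\<^sub>R (radial_curv m t - K t)^2) = (\<lambda>t. (excess t)^2)"
  by (rule ext) (auto simp: indicator_def curv_m_minus_K excess_neg)

lemma L2_integrable: "set_integrable lborel {0..} (\<lambda>t. (radial_curv m t - K t)^2)"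
  unfolding set_integrable_def L2_eq by (rule excess_sq_integrable)

lemma L2_bound: "(LBINT t:{0..}. (radial_curv m t - K t)^2) \<le> 192 * M^2 * \<eta> / \<beta>^4"
  unfolding set_lebesgue_integral_def L2_eq by (rule excess_sq_integral)

lemma curv_m_ge_K: "t \<ge> 0 \<Longrightarrow> radial_curv m t \<ge> K t"
  using curv_m_minus_K[of t] excess_nonneg[of t] by simp

text \<open>At t_k the excess is at least k + 2 while K > -1, so G_m is unbounded above.\<close>
lemma curv_m_spike: "radial_curv m (centre k) > real k + 1"
proof -
  have t0: "centre k > 0" using centre_ge[of k] by simp
  have fp: "f (centre k) > 0" using f_pos[OF t0] .
  have wk: "ramp' k (centre k) = height k * steep k / 2" by (simp add: ramp'_def x0)
  have "height k * steep k / 2 \<ge> (real k + 2) * (f (centre k))^2"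
    using height_steep[of k] height_pos[of k]
    by (simp add: algebra_simps)
  then have Wb: "ramps' (centre k) \<ge> (real k + 2) * (f (centre k))^2"
    using ramps'_ge[of k "centre k"] wk by simp
  have gp: "0 < g (centre k)" "g (centre k) \<le> 1" using g_ge[of "centre k"] g_le1 by auto
  have "(real k + 2) * (f (centre k))^2 / ((f (centre k))^2 * 1)
      \<le> ramps' (centre k) / ((f (centre k))^2 * g (centre k))"
    using Wb gp fp ramps'_nonneg[of "centre k"] by (intro frac_le mult_left_mono mult_pos_pos) auto
  then have "excess (centre k) \<ge> real k + 2" using fp by (simp add: excess_def)
  then show ?thesis using curv_m_eq[OF t0] centre_K[of k] by simp
qed

lemma limsup_curv_m: "Limsup at_top (\<lambda>t. ereal (radial_curv m t)) = \<infinity>"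
proof (rule Limsup_eqI)
  fix P :: "real \<Rightarrow> bool" assume "eventually P at_top"
  then obtain N where N: "\<And>t. t \<ge> N \<Longrightarrow> P t" by (auto simp: eventually_at_top_linorder)
  show "\<infinity> \<le> Sup ((\<lambda>t. ereal (radial_curv m t)) ` Collect P)"
  proof -
    have "(SUP t\<in>Collect P. ereal (radial_curv m t)) = \<infinity>"
    proof (rule SUP_PInfty)
      fix n :: nat
      define k where "k = max n (nat \<lceil>N\<rceil>)"
      have "centre k \<ge> N" using centre_ge[of k] unfolding k_def by linarith
      moreover have "ereal (real n) \<le> ereal (radial_curv m (centre k))"
        using curv_m_spike[of k] unfolding k_def by simp
      ultimately show "\<exists>i\<in>Collect P. ereal (real n) \<le> ereal (radial_curv m i)" using N by blast
    qed
    then show ?thesis by simp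
  qed
qed simp

subsection \<open>Total curvature of m\<close>

definition curv_density :: "real \<Rightarrow> real" where "curv_density t = K t * f t * g t + ramps' t / f t"

lemma curv_density_eq: "t > 0 \<Longrightarrow> radial_curv m t * m t = curv_density t"
  using f_pos[of t] g_ge[of t]
  by (simp add: curv_m_eq curv_density_def m_def excess_def power2_eq_square field_simps)

lemma Kfg_integrable: "set_integrable lborel {0<..} (\<lambda>t. K t * f t * g t)"
proof (rule set_integrable_bound[OF Kf_integrable])
  show "set_borel_measurable lborel {0<..} (\<lambda>t. K t * f t * g t)"
    unfolding set_borel_measurable_def by measurable
  show "AE x in lborel. x \<in> {0<..} \<longrightarrow> norm (K x * f x * g x) \<le> norm (K x * f x)"
  proof (rule AE_I2, intro impI)
    fix x :: real
    have "\<bar>g x\<bar> \<le> 1" using g_ge[of x] g_le1[of x] by simp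
    then have "\<bar>K x * f x\<bar> * \<bar>g x\<bar> \<le> \<bar>K x * f x\<bar> * 1" by (intro mult_left_mono) auto
    then show "norm (K x * f x * g x) \<le> norm (K x * f x)" by (simp add: abs_mult)
  qed
qed

lemma ramps'_over_f_set_integrable: "set_integrable lborel {0<..} (\<lambda>t. ramps' t / f t)"
proof -
  have "(\<lambda>t. indicator {0<..} t *\<^sub>R (ramps' t / f t)) = (\<lambda>t. ramps' t / f t)"
    by (rule ext) (auto simp: indicator_def ramps'_low)
  then show ?thesis unfolding set_integrable_def using ramps'_over_f_integrable by simp
qed

lemma ramps'_over_f_set_integral:
  "(LBINT t:{0<..}. ramps' t / f t) = integral\<^sup>L lborel (\<lambda>t. ramps' t / f t)"
proof -
  have "(\<lambda>t. indicator {0<..} t *\<^sub>R (ramps' t / f t)) = (\<lambda>t. ramps' t / f t)"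
    by (rule ext) (auto simp: indicator_def ramps'_low)
  then show ?thesis unfolding set_lebesgue_integral_def by simp
qed

lemma curv_density_integrable: "set_integrable lborel {0<..} curv_density"
  unfolding curv_density_def[abs_def]
  by (intro set_integral_add Kfg_integrable ramps'_over_f_set_integrable)

lemma finite_total_curvature_m: "finite_total_curvature m"
  and total_curvature_m: "total_curvature m = 2 * pi * (LBINT t:{0<..}. curv_density t)"
  using finite_total_curvature_by_density[OF curv_density_integrable curv_density_eq measurable_m]
  by auto

lemma one_minus_g_le: "t > 0 \<Longrightarrow> 1 - g t \<le> 2 * \<eta> / \<beta>^2"
proof -
  assume "t > 0"
  then have "1 - g t = H t" using g_eq_one_minus_H by simp
  also have "\<dots> \<le> total_height / \<beta>^2" by (rule H_le)
  also have "\<dots> \<le> 2 * \<eta> / \<beta>^2" using total_height_le beta by (simp add: divide_right_mono)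
  finally show ?thesis .
qed

text \<open>Replacing f by m = f g changes the K f part of the curvature density by K f (1 - g),
  and 1 - g \<le> 2 eta / beta^2.\<close>
lemma Kf_defect_bound:
  "\<bar>LBINT t:{0<..}. K t * f t - K t * f t * g t\<bar> \<le> 2 * \<eta> / \<beta>^2 * abs_curv_mass"
proof -
  define D where "D = 2 * \<eta> / \<beta>^2"
  have idiff: "set_integrable lborel {0<..} (\<lambda>t. K t * f t - K t * f t * g t)"
    by (intro set_integral_diff(1) Kf_integrable Kfg_integrable)
  have pointwise: "\<bar>K t * f t - K t * f t * g t\<bar> \<le> D * \<bar>K t * f t\<bar>" if "t > 0" for t
  proof -
    have "K t * f t - K t * f t * g t = (K t * f t) * (1 - g t)" by (simp add: algebra_simps)
    moreover have "\<bar>1 - g t\<bar> = 1 - g t" using g_le1[of t] by simp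
    ultimately have "\<bar>K t * f t - K t * f t * g t\<bar> = \<bar>K t * f t\<bar> * (1 - g t)"
      by (simp add: abs_mult)
    also have "\<dots> \<le> \<bar>K t * f t\<bar> * D"
      using one_minus_g_le[OF that] by (intro mult_left_mono) (auto simp: D_def)
    finally show ?thesis by (simp add: mult.commute)
  qed
  have "\<bar>LBINT t:{0<..}. K t * f t - K t * f t * g t\<bar>
      \<le> (LBINT t:{0<..}. \<bar>K t * f t - K t * f t * g t\<bar>)"
    using set_integral_norm_bound[OF idiff] by simp
  also have "\<dots> \<le> (LBINT t:{0<..}. D * \<bar>K t * f t\<bar>)"
  proof (rule set_integral_mono)
    show "set_integrable lborel {0<..} (\<lambda>t. \<bar>K t * f t - K t * f t * g t\<bar>)"
      by (rule set_integrable_abs[OF idiff])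
    show "set_integrable lborel {0<..} (\<lambda>t. D * \<bar>K t * f t\<bar>)"
      by (rule set_integrable_mult_right[OF set_integrable_abs[OF Kf_integrable]])
  qed (use pointwise in auto)
  also have "\<dots> = D * abs_curv_mass" by (simp add: abs_curv_mass_def)
  finally show ?thesis by (simp add: D_def)
qed

lemma ramps'_over_f_mass:
  "0 \<le> (LBINT t:{0<..}. ramps' t / f t)" "(LBINT t:{0<..}. ramps' t / f t) \<le> 8 * M * \<eta> / \<beta>"
  using ramps'_over_f_nonneg ramps'_over_f_integral
  by (simp_all add: ramps'_over_f_set_integral)

lemma total_curvature_difference:
  "\<bar>total_curvature f - total_curvature m\<bar>
     \<le> 2 * pi * (2 * \<eta> / \<beta>^2 * abs_curv_mass + 8 * M * \<eta> / \<beta>)"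
proof -
  have "curv_mass - (LBINT t:{0<..}. curv_density t)
      = (LBINT t:{0<..}. K t * f t - K t * f t * g t) - (LBINT t:{0<..}. ramps' t / f t)"
    unfolding curv_mass_def curv_density_def[abs_def]
    using set_integral_add(2)[OF Kfg_integrable ramps'_over_f_set_integrable]
      set_integral_diff(2)[OF Kf_integrable Kfg_integrable]
    by simp
  then have "\<bar>curv_mass - (LBINT t:{0<..}. curv_density t)\<bar>
      \<le> 2 * \<eta> / \<beta>^2 * abs_curv_mass + 8 * M * \<eta> / \<beta>"
    using Kf_defect_bound ramps'_over_f_mass by linarith
  moreover have "\<bar>total_curvature f - total_curvature m\<bar>
      = 2 * pi * \<bar>curv_mass - (LBINT t:{0<..}. curv_density t)\<bar>"
    unfolding total_curvature_f total_curvature_m by (simp add: abs_mult flip: right_diff_distrib)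
  ultimately show ?thesis by (metis mult_left_mono pi_ge_zero mult_nonneg_nonneg zero_le_numeral)
qed

end

section \<open>Choice of the parameters and the main theorem\<close>

lemma small_parameter_exists:
  fixes \<beta> M C \<epsilon> :: real
  assumes "\<beta> > 0" "M > 0" "C \<ge> 0" "\<epsilon> > 0"
  shows "\<exists>\<eta>>0. \<eta> \<le> 1 \<and> \<eta> \<le> \<beta>^2 / 4
           \<and> sqrt (192 * M^2 * \<eta> / \<beta>^4) < \<epsilon> \<and> \<eta> * C < \<epsilon>"
proof -
  define \<eta> where "\<eta> = min (min 1 (\<beta>^2/4)) (min (\<epsilon>^2 * \<beta>^4 / (400 * M^2)) (\<epsilon> / (2 * (C + 1))))"
  have pos: "\<eta> > 0" unfolding \<eta>_def using assms by auto
  have le: "\<eta> \<le> 1" "\<eta> \<le> \<beta>^2/4" "\<eta> \<le> \<epsilon>^2 * \<beta>^4 / (400 * M^2)" "\<eta> \<le> \<epsilon> / (2 * (C + 1))"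
    unfolding \<eta>_def by (meson min.cobounded1 min.cobounded2 order_trans)+
  have "192 * M^2 * \<eta> / \<beta>^4 \<le> 192 * M^2 * (\<epsilon>^2 * \<beta>^4 / (400 * M^2)) / \<beta>^4"
    using le(3) assms by (intro divide_right_mono mult_left_mono) auto
  also have "\<dots> < \<epsilon>^2" using assms by (simp add: field_simps)
  finally have "sqrt (192 * M^2 * \<eta> / \<beta>^4) < sqrt (\<epsilon>^2)" by (rule real_sqrt_less_mono)
  moreover have "\<eta> * C \<le> \<epsilon> / (2 * (C + 1)) * C" using le(4) assms by (intro mult_right_mono) auto
  moreover have "\<epsilon> / (2 * (C + 1)) * C < \<epsilon>"
    using assms by (simp add: field_simps add_nonneg_pos mult_nonneg_nonneg)
  ultimately show ?thesis using pos le(1,2) assms by (intro exI[of _ \<eta>]) auto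
qed

context finite_curvature_model
begin

lemma spike_centres_exist:
  assumes "\<beta> > 0" "\<And>s. s \<ge> 2 \<Longrightarrow> f s \<ge> \<beta> * (s - 1)"
  obtains centre :: "nat \<Rightarrow> real"
  where "centre 0 \<ge> 3" "\<And>k. centre (Suc k) \<ge> centre k + 2" "\<And>k. K (centre k) > -1"
proof -
  have "\<exists>t. t \<ge> R \<and> K t > -1" for R using K_above_minus_1_unbounded[OF assms] by blast
  then obtain next_point where nxt: "\<And>R. next_point R \<ge> R \<and> K (next_point R) > -1"
    by metis
  define centre where "centre = rec_nat (next_point 3) (\<lambda>k r. next_point (r + 2))"
  have "centre 0 \<ge> 3" using nxt[of 3] by (simp add: centre_def)
  moreover have "centre (Suc k) \<ge> centre k + 2" for k using nxt[of "centre k + 2"]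
    by (simp add: centre_def)
  moreover have "K (centre k) > -1" for k by (cases k) (use nxt in \<open>auto simp: centre_def\<close>)
  ultimately show ?thesis by (rule that)
qed

lemma approximating_surface_exists:
  assumes "\<epsilon> > 0"
  shows "\<exists>m :: real \<Rightarrow> real.
           model_surface m \<and> finite_total_curvature m
         \<and> (\<forall>t\<ge>0. radial_curv m t \<ge> K t)
         \<and> set_integrable lborel {0..} (\<lambda>t. (radial_curv m t - K t)\<^sup>2)
         \<and> sqrt (LBINT t:{0..}. (radial_curv m t - K t)\<^sup>2) < \<epsilon>
         \<and> Limsup at_top (\<lambda>t. ereal (radial_curv m t)) = \<infinity>
         \<and> \<bar>total_curvature f - total_curvature m\<bar> < \<epsilon>"
proof -
  obtain \<beta> where beta: "\<beta> > 0" "\<And>s. s \<ge> 2 \<Longrightarrow> f s \<ge> \<beta> * (s - 1)"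
    using f_linear_lower_bound by blast
  obtain M where M: "M > 0" "\<And>x. smooth_step' x \<le> M" using smooth_step'_bounded by blast
  obtain x0 where x0: "\<bar>x0\<bar> < 1" "smooth_step' x0 = 1/2" using smooth_step'_half by blast
  obtain centre where centre: "centre 0 \<ge> 3" "\<And>k. centre (Suc k) \<ge> centre k + 2"
    "\<And>k. K (centre k) > -1"
    using spike_centres_exist[OF beta] by blast
  define C where "C = 2 * pi * (2 * abs_curv_mass / \<beta>^2 + 8 * M / \<beta>)"
  have "C \<ge> 0" unfolding C_def using abs_curv_mass_nonneg beta M by auto
  then obtain \<eta> where eta: "\<eta> > 0" "\<eta> \<le> 1" "\<eta> \<le> \<beta>^2 / 4"
    "sqrt (192 * M^2 * \<eta> / \<beta>^4) < \<epsilon>" "\<eta> * C < \<epsilon>"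
    using small_parameter_exists[OF beta(1) M(1) _ assms] by blast
  interpret c: spike_construction f \<beta> \<eta> M x0 centre
    by unfold_locales (use beta eta M x0 centre in auto)
  have "sqrt (LBINT t:{0..}. (radial_curv c.m t - K t)\<^sup>2) < \<epsilon>"
    using real_sqrt_le_mono[OF c.L2_bound] eta(4) by linarith
  moreover have "\<bar>total_curvature f - total_curvature c.m\<bar> < \<epsilon>"
    using c.total_curvature_difference eta(5) by (simp add: C_def field_simps)
  ultimately show ?thesis
    using c.m_model_surface c.finite_total_curvature_m c.curv_m_ge_K c.L2_integrable c.limsup_curv_m
    by blast
qed

end

theorem theorem3p1:
  fixes f :: "real \<Rightarrow> real"
  assumes "model_surface f"
    and "finite_total_curvature f"
    and "total_curvature f < 2 * pi"
  shows "\<forall>\<epsilon>>0. \<exists>m :: real \<Rightarrow> real.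
           model_surface m \<and> finite_total_curvature m
         \<and> (\<forall>t\<ge>0. radial_curv m t \<ge> radial_curv f t)
         \<and> set_integrable lborel {0..} (\<lambda>t. (radial_curv m t - radial_curv f t)\<^sup>2)
         \<and> sqrt (LBINT t:{0..}. (radial_curv m t - radial_curv f t)\<^sup>2) < \<epsilon>
         \<and> Limsup at_top (\<lambda>t. ereal (radial_curv m t)) = \<infinity>
         \<and> \<bar>total_curvature f - total_curvature m\<bar> < \<epsilon>"
proof -
  interpret finite_curvature_model f using assms by unfold_locales
  show ?thesis using approximating_surface_exists by blast
qed

end
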